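(* Let $I\lhd K[x_1,\ldots,x_n]$, let $\pi:\mathbb{R}^n\to\mathbb{R}^{m+1}$ be a rational projection, $l=n-m-1$, and fix $v^{(1)},\ldots,v^{(l)}\in\mathbb{Z}^n$ spanning $\ker\pi$. Let $f_1,\ldots,f_{n-m}\in K[x_1,\ldots,x_n]$, $Y=\bigcap_{i=1}^{n-m}\mathcal{T}(f_i)\subseteq\mathbb{R}^n$ and $\tilde Y=\bigcap_{i=1}^{n-m}\mathcal{T}(\tilde f_i)\subseteq\mathbb{R}^{n+l}$. Then: (a) if the intersection $Y$ is proper, then $\tilde Y$ is proper; (b) if the intersection $Y$ is transversal, then $\tilde Y$ is transversal; (c) if $f_1,\ldots,f_{n-m}$ are Newton-nondegenerate, then $\tilde f_1,\ldots,\tilde f_{n-m}$ are Newton-nondegenerate; (d) if the intersection $Y$ is complete, then $\tilde Y$ is complete.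
   Context: $K$ is a field with a real valuation $\mathrm{val}:K\to\mathbb{R}\cup\{\infty\}$, extended to an algebraic closure $\bar K$. For a (Laurent) polynomial $f=\sum_\alpha c_\alpha x^\alpha$ over $K$ in $N$ variables, its tropical hypersurface is $\mathcal{T}(f)=\{w\in\mathbb{R}^N:\ \min_\alpha(\mathrm{val}(c_\alpha)+\alpha\cdot w)\text{ is attained at least twice}\}$; for an ideal $I$, $\mathcal{T}(I)=\bigcap_{f\in I}\mathcal{T}(f)$. $\mathrm{New}(f)$ is the convex hull of the support of $f$; $\mathcal{T}(f)$ is dual to the regular subdivision of $\mathrm{New}(f)$ induced by lifting each exponent $\alpha$ to height $\mathrm{val}(c_\alpha)$ and projecting the lower faces; a cell $C$ of $\mathcal{T}(f)$ has a dual cell $C^\vee$ in this subdivision. A rational projection $\pi:\mathbb{R}^n\to\mathbb{R}^{m+1}$ is $x\mapsto Ax$ with a rational $(m+1)\times n$ matrix $A$ of rank $m+1$. For $f\in K[x_1,\ldots,x_n]$, $\tilde f:=f\big(x_1\prod_{j=1}^l\lambda_j^{v^{(j)}_1},\ldots,x_n\prod_{j=1}^l\lambda_j^{v^{(j)}_n}\big)\in K[x_1,\ldots,x_n,\lambda_1^{\pm1},\ldots,\lambda_l^{\pm1}]$, whose tropical hypersurface lives in $\mathbb{R}^{n+l}$. For $f_1,\ldots,f_k$ in $N$ variables let $Y_i=\mathcal{T}(f_i)$, $Y=Y_1\cap\cdots\cap Y_k$, $U=Y_1\cup\cdots\cup Y_k=\mathcal{T}(f_1\cdots f_k)$. The intersection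 is proper if $\dim Y=N-k$. For a nonempty cell $C$ of a proper intersection, write $C=\bigcap_i C_i$ with $C_i$ the minimal cell of $Y_i$ containing $C$; the dual cell of $C$ as a cell of $U$ is $C^\vee=C_1^\vee+\cdots+C_k^\vee$, and $Y$ is transversal along $C$ if $\dim C^\vee=\sum_i\dim C_i^\vee$. $Y$ is transversal if for every $J\subseteq\{1,\ldots,k\}$ with $|J|\ge2$ the intersection $\bigcap_{j\in J}Y_j$ is proper and transversal along each of its cells. A proper intersection is complete if $\mathcal{T}(\langle f_1,\ldots,f_k\rangle)=\bigcap_i\mathcal{T}(f_i)$. The polynomials $f_1,\ldots,f_k$ are Newton-nondegenerate if for every choice of faces $A_i\subseteq\mathrm{New}(f_i)$ such that $A_1+\cdots+A_k$ is a face of $\mathrm{New}(f_1)+\cdots+\mathrm{New}(f_k)$ of dimension at most $k-1$, the restrictions $f_i|_{A_i}$ (sum of terms of $f_i$ with exponents in $A_i$) have no common zero in $(\bar K^* )^N$. *)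

theory Defs
  imports "HOL-Analysis.Analysis" "HOL-Library.Function_Algebras" "HOL-Library.Poly_Mapping"
    "HOL-Computational_Algebra.Polynomial"
begin

section \<open>Real vector space structure on functions (points of R^N are functions nat => real
  vanishing from index N on)\<close>

instantiation "fun" :: (type, real_vector) real_vector
begin
definition scaleR_fun :: "real \<Rightarrow> ('a \<Rightarrow> 'b) \<Rightarrow> 'a \<Rightarrow> 'b" where
  "scaleR_fun r f = (\<lambda>x. r *\<^sub>R f x)"
instance by standard (auto simp: scaleR_fun_def fun_eq_iff scaleR_add_right scaleR_add_left)
end

section \<open>Laurent polynomials: finitely supported maps from exponent vectors to coefficients.
  Variable i is x_(i+1) (0-based).\<close>

type_synonym 'a lpoly = "(nat \<Rightarrow>\<^sub>0 int) \<Rightarrow>\<^sub>0 'a"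

definition rspace :: "nat \<Rightarrow> (nat \<Rightarrow> real) set" where
  "rspace N = {w. \<forall>i\<ge>N. w i = 0}"

text \<open>The ring K[x_0..x_(p-1), x_p^(+-1)..x_(N-1)^(+-1)]: membership predicate.
  With p = N this is the polynomial ring K[x_0..x_(N-1)].\<close>
definition lpoly_in :: "nat \<Rightarrow> nat \<Rightarrow> 'a::zero lpoly \<Rightarrow> bool" where
  "lpoly_in p N f \<longleftrightarrow> (\<forall>\<alpha>\<in>Poly_Mapping.keys f. (\<forall>i<p. 0 \<le> Poly_Mapping.lookup \<alpha> i) \<and> (\<forall>i\<ge>N. Poly_Mapping.lookup \<alpha> i = 0))"

definition expvec :: "(nat \<Rightarrow>\<^sub>0 int) \<Rightarrow> nat \<Rightarrow> real" where
  "expvec \<alpha> = (\<lambda>i. real_of_int (Poly_Mapping.lookup \<alpha> i))"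

definition dotp :: "nat \<Rightarrow> (nat \<Rightarrow>\<^sub>0 int) \<Rightarrow> (nat \<Rightarrow> real) \<Rightarrow> real" where
  "dotp N \<alpha> w = (\<Sum>i<N. real_of_int (Poly_Mapping.lookup \<alpha> i) * w i)"

definition tw :: "('a::zero \<Rightarrow> real) \<Rightarrow> nat \<Rightarrow> 'a lpoly \<Rightarrow> (nat \<Rightarrow> real) \<Rightarrow> (nat \<Rightarrow>\<^sub>0 int) \<Rightarrow> real" where
  "tw val N f w \<alpha> = val (Poly_Mapping.lookup f \<alpha>) + dotp N \<alpha> w"

text \<open>Tropical hypersurface T(f) in R^N (convention: T(0) = R^N).\<close>
definition trop_hyp :: "('a::zero \<Rightarrow> real) \<Rightarrow> nat \<Rightarrow> 'a lpoly \<Rightarrow> (nat \<Rightarrow> real) set" where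
  "trop_hyp val N f = {w \<in> rspace N. f = 0 \<or>
     (\<exists>\<alpha>\<in>Poly_Mapping.keys f. \<exists>\<beta>\<in>Poly_Mapping.keys f. \<alpha> \<noteq> \<beta> \<and> tw val N f w \<alpha> = tw val N f w \<beta> \<and>
        (\<forall>\<gamma>\<in>Poly_Mapping.keys f. tw val N f w \<alpha> \<le> tw val N f w \<gamma>))}"

definition trop_var :: "('a::zero \<Rightarrow> real) \<Rightarrow> nat \<Rightarrow> 'a lpoly set \<Rightarrow> (nat \<Rightarrow> real) set" where
  "trop_var val N I = {w \<in> rspace N. \<forall>f\<in>I. w \<in> trop_hyp val N f}"

definition init_set :: "('a::zero \<Rightarrow> real) \<Rightarrow> nat \<Rightarrow> 'a lpoly \<Rightarrow> (nat \<Rightarrow> real) \<Rightarrow> (nat \<Rightarrow>\<^sub>0 int) set" where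
  "init_set val N f w = {\<alpha>\<in>Poly_Mapping.keys f. \<forall>\<gamma>\<in>Poly_Mapping.keys f. tw val N f w \<alpha> \<le> tw val N f w \<gamma>}"

text \<open>Dual cell (in the regular subdivision of New(f)) of the minimal cell of T(f)
  containing w, i.e. of the cell having w in its relative interior.\<close>
definition dual_cell :: "('a::zero \<Rightarrow> real) \<Rightarrow> nat \<Rightarrow> 'a lpoly \<Rightarrow> (nat \<Rightarrow> real) \<Rightarrow> (nat \<Rightarrow> real) set" where
  "dual_cell val N f w = convex hull (expvec ` init_set val N f w)"

definition newton :: "'a::zero lpoly \<Rightarrow> (nat \<Rightarrow> real) set" where
  "newton f = convex hull (expvec ` Poly_Mapping.keys f)"

definition affdim :: "(nat \<Rightarrow> real) set \<Rightarrow> int" where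
  "affdim S = (if S = {} then -1 else
     Max {int (card T) - 1 | T. finite T \<and> T \<subseteq> S \<and> \<not> affine_dependent T})"

definition pdim :: "(nat \<Rightarrow> real) set \<Rightarrow> int" where
  "pdim S = Max {affdim C | C. convex C \<and> C \<subseteq> S}"

definition msum :: "nat set \<Rightarrow> (nat \<Rightarrow> (nat \<Rightarrow> real) set) \<Rightarrow> (nat \<Rightarrow> real) set" where
  "msum J C = {\<Sum>j\<in>J. x j | x. \<forall>j\<in>J. x j \<in> C j}"

definition trop_inter :: "('a::zero \<Rightarrow> real) \<Rightarrow> nat \<Rightarrow> (nat \<Rightarrow> 'a lpoly) \<Rightarrow> nat set \<Rightarrow> (nat \<Rightarrow> real) set" where
  "trop_inter val N fs J = {w \<in> rspace N. \<forall>j\<in>J. w \<in> trop_hyp val N (fs j)}"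

definition proper_int :: "('a::zero \<Rightarrow> real) \<Rightarrow> nat \<Rightarrow> (nat \<Rightarrow> 'a lpoly) \<Rightarrow> nat set \<Rightarrow> bool" where
  "proper_int val N fs J \<longleftrightarrow> pdim (trop_inter val N fs J) = int N - int (card J)"

text \<open>Transversal along every cell C: for w in the relative interior of C, the minimal cell
  C_j of T(f_j) containing C has dual cell dual_cell (fs j) w, and C^dual is their Minkowski sum.\<close>
definition transversal_cells :: "('a::zero \<Rightarrow> real) \<Rightarrow> nat \<Rightarrow> (nat \<Rightarrow> 'a lpoly) \<Rightarrow> nat set \<Rightarrow> bool" where
  "transversal_cells val N fs J \<longleftrightarrow>
     (\<forall>w\<in>trop_inter val N fs J.
        affdim (msum J (\<lambda>j. dual_cell val N (fs j) w)) = (\<Sum>j\<in>J. affdim (dual_cell val N (fs j) w)))"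

definition transversal :: "('a::zero \<Rightarrow> real) \<Rightarrow> nat \<Rightarrow> (nat \<Rightarrow> 'a lpoly) \<Rightarrow> nat \<Rightarrow> bool" where
  "transversal val N fs k \<longleftrightarrow>
     (\<forall>J\<subseteq>{..<k}. 2 \<le> card J \<longrightarrow> proper_int val N fs J \<and> transversal_cells val N fs J)"

definition gen_ideal :: "nat \<Rightarrow> nat \<Rightarrow> (nat \<Rightarrow> 'a::comm_ring_1 lpoly) \<Rightarrow> nat \<Rightarrow> 'a lpoly set" where
  "gen_ideal p N fs k = {\<Sum>i<k. g i * fs i | g. \<forall>i<k. lpoly_in p N (g i)}"

definition complete_int :: "('a::comm_ring_1 \<Rightarrow> real) \<Rightarrow> nat \<Rightarrow> nat \<Rightarrow> (nat \<Rightarrow> 'a lpoly) \<Rightarrow> nat \<Rightarrow> bool" where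
  "complete_int val p N fs k \<longleftrightarrow> proper_int val N fs {..<k} \<and>
     trop_var val N (gen_ideal p N fs k) = trop_inter val N fs {..<k}"

definition restr :: "'a::comm_monoid_add lpoly \<Rightarrow> (nat \<Rightarrow> real) set \<Rightarrow> 'a lpoly" where
  "restr f A = (\<Sum>\<alpha>\<in>{\<alpha>\<in>Poly_Mapping.keys f. expvec \<alpha> \<in> A}. Poly_Mapping.single \<alpha> (Poly_Mapping.lookup f \<alpha>))"

definition eval_at :: "('a::zero \<Rightarrow> 'b::field) \<Rightarrow> nat \<Rightarrow> 'a lpoly \<Rightarrow> (nat \<Rightarrow> 'b) \<Rightarrow> 'b" where
  "eval_at emb N f z = (\<Sum>\<alpha>\<in>Poly_Mapping.keys f. emb (Poly_Mapping.lookup f \<alpha>) * (\<Prod>i<N. z i powi Poly_Mapping.lookup \<alpha> i))"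

definition newton_nondeg :: "('a::comm_monoid_add \<Rightarrow> 'b::field) \<Rightarrow> nat \<Rightarrow> (nat \<Rightarrow> 'a lpoly) \<Rightarrow> nat \<Rightarrow> bool" where
  "newton_nondeg emb N fs k \<longleftrightarrow>
     (\<forall>A. (\<forall>i<k. A i \<noteq> {} \<and> A i face_of newton (fs i)) \<and>
          msum {..<k} A face_of msum {..<k} (\<lambda>i. newton (fs i)) \<and>
          affdim (msum {..<k} A) \<le> int k - 1
        \<longrightarrow> \<not> (\<exists>z. (\<forall>i<N. z i \<noteq> 0) \<and> (\<forall>i<k. eval_at emb N (restr (fs i) (A i)) z = 0)))"

text \<open>f~ : substitute x_i by x_i * prod_j lambda_j^(v j i); lambda_j is variable n+j.\<close>
definition tilde_exp :: "nat \<Rightarrow> nat \<Rightarrow> (nat \<Rightarrow> nat \<Rightarrow> int) \<Rightarrow> (nat \<Rightarrow>\<^sub>0 int) \<Rightarrow> (nat \<Rightarrow>\<^sub>0 int)" where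
  "tilde_exp n l v \<alpha> = \<alpha> + (\<Sum>j<l. Poly_Mapping.single (n + j) (\<Sum>i<n. Poly_Mapping.lookup \<alpha> i * v j i))"

definition tilde :: "nat \<Rightarrow> nat \<Rightarrow> (nat \<Rightarrow> nat \<Rightarrow> int) \<Rightarrow> 'a::comm_monoid_add lpoly \<Rightarrow> 'a lpoly" where
  "tilde n l v f = (\<Sum>\<alpha>\<in>Poly_Mapping.keys f. Poly_Mapping.single (tilde_exp n l v \<alpha>) (Poly_Mapping.lookup f \<alpha>))"

text \<open>Standing assumptions: real valuation on K (values on nonzero elements; val 0 = infinity
  is never used), and an algebraic closure L of K given by an embedding emb.\<close>
definition real_valuation :: "('a::field \<Rightarrow> real) \<Rightarrow> bool" where
  "real_valuation val \<longleftrightarrow>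
     (\<forall>a b. a \<noteq> 0 \<and> b \<noteq> 0 \<longrightarrow> val (a * b) = val a + val b) \<and>
     (\<forall>a b. a \<noteq> 0 \<and> b \<noteq> 0 \<and> a + b \<noteq> 0 \<longrightarrow> min (val a) (val b) \<le> val (a + b))"

definition alg_closure_emb :: "('a::field \<Rightarrow> 'b::field) \<Rightarrow> bool" where
  "alg_closure_emb emb \<longleftrightarrow>
     inj emb \<and> emb 1 = 1 \<and> (\<forall>a b. emb (a + b) = emb a + emb b) \<and> (\<forall>a b. emb (a * b) = emb a * emb b) \<and>
     (\<forall>p :: 'b poly. 0 < degree p \<longrightarrow> (\<exists>x. poly p x = 0)) \<and>
     (\<forall>y. \<exists>p :: 'a poly. p \<noteq> 0 \<and> poly (map_poly emb p) y = 0)"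

end

theory Submission
  imports Defs
begin

(* The substitution acts on exponents by the invertible integer map
     tilde_exp : alpha |-> alpha + sum_j (v_j . alpha) e_(n+j),
   so f~ is f with its terms relabelled.  Dually, for a weight w in R^(n+l) one has
   alpha~ . w = alpha . weight_change w, with weight_change a linear bijection of R^(n+l)
   fixing the lambda-coordinates.  Since f only involves x_1..x_n, this gives
     T(f~) = weight_change^(-1) (T(f) x R^l),
   the key identity of the file.  Consequently:
   (a) dimensions of intersections grow by exactly l (pdim_cyl), so properness is kept;
   (b) dual cells of f~ are images of dual cells of f under the injective linear map
       exp_change, which preserves Minkowski sums and affine dimension;
   (c) faces of New(f~) are images of faces of New(f), and initial forms of f~ vanish at z
       iff those of f vanish at a related point of the torus (eval_tilde);
   (d) each element of the ideal generated by the f~_i in K[x, lambda^(+-1)] is the image of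
       some G_1 f_1 + ... + G_k f_k; if a weight violated its tropical condition, the
       lambda-homogeneous component through the unique minimising exponent would be
       lambda^mu times an element of the ideal of the f_i in K[x] violating it as well. *)

section \<open>Linear algebra in R^N\<close>

definition unit_vec :: "nat \<Rightarrow> nat \<Rightarrow> real" where
  "unit_vec k = (\<lambda>i. if i = k then 1 else 0)"

lemma fun_sum_apply: "(\<Sum>i\<in>A. (g i :: nat \<Rightarrow> real)) x = (\<Sum>i\<in>A. g i x)"
  by (induction A rule: infinite_finite_induct) auto

lemma scaleR_apply: "(c *\<^sub>R (g :: nat \<Rightarrow> real)) x = c * g x"
  by (simp add: scaleR_fun_def)

lemma subspace_rspace: "subspace (rspace N)"
  by (auto simp: subspace_def rspace_def scaleR_apply)

lemma rspace_mono: "n \<le> N \<Longrightarrow> rspace n \<subseteq> rspace N"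
  by (auto simp: rspace_def)

lemma rspace_diff: "x \<in> rspace N \<Longrightarrow> y \<in> rspace N \<Longrightarrow> x - y \<in> rspace N"
  by (auto simp: rspace_def)

lemma rspace_span: "rspace N \<subseteq> span (unit_vec ` {..<N})"
proof
  fix x assume x: "x \<in> rspace N"
  have "x = (\<Sum>i<N. x i *\<^sub>R unit_vec i)"
  proof
    fix j show "x j = (\<Sum>i<N. x i *\<^sub>R unit_vec i) j"
      using x by (auto simp: fun_sum_apply scaleR_apply unit_vec_def rspace_def if_distrib cong: if_cong)
  qed
  also have "\<dots> \<in> span (unit_vec ` {..<N})"
    by (intro span_sum span_scale span_base) auto
  finally show "x \<in> span (unit_vec ` {..<N})" .
qed

lemma indep_rspace_bound:
  assumes "independent S" "S \<subseteq> rspace N"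
  shows "finite S \<and> card S \<le> N"
proof -
  have "finite S \<and> card S \<le> card (unit_vec ` {..<N})"
    by (rule independent_span_bound) (use assms rspace_span in auto)
  moreover have "card (unit_vec ` {..<N}) \<le> N"
    using card_image_le[of "{..<N}" unit_vec] by simp
  ultimately show ?thesis by linarith
qed

lemma finite_basis_rspace:
  assumes "V \<subseteq> rspace N"
  obtains B where "B \<subseteq> V" "independent B" "V \<subseteq> span B" "card B = dim V" "finite B" "card B \<le> N"
proof -
  obtain B where B: "B \<subseteq> V" "independent B" "V \<subseteq> span B" "card B = dim V"
    by (rule basis_exists)
  with indep_rspace_bound[of B N] assms show ?thesis using that by auto
qed

lemma card_le_dim:
  assumes "V \<subseteq> rspace N" "independent S" "S \<subseteq> span V"
  shows "card S \<le> dim V"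
proof -
  obtain B where B: "B \<subseteq> V" "independent B" "V \<subseteq> span B" "card B = dim V" "finite B"
    using finite_basis_rspace[OF assms(1)] by metis
  have "span V \<subseteq> span B" using B(3) by (simp add: span_minimal)
  then have "finite S \<and> card S \<le> card B"
    using independent_span_bound[OF B(5) assms(2)] assms(3) by auto
  with B show ?thesis by simp
qed

lemma dim_le_rspace: "V \<subseteq> rspace N \<Longrightarrow> dim V \<le> N"
  by (metis finite_basis_rspace)

lemma dim_union_le:
  assumes "A \<subseteq> rspace N" "finite E" "X \<subseteq> span (A \<union> E)"
  shows "dim X \<le> dim A + card E"
proof -
  obtain B where B: "B \<subseteq> A" "independent B" "A \<subseteq> span B" "card B = dim A" "finite B"
    using finite_basis_rspace[OF assms(1)] by metis
  have "A \<union> E \<subseteq> span (B \<union> E)"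
    using B(3) span_mono[of B "B \<union> E"] span_superset[of "B \<union> E"] by blast
  then have "span (A \<union> E) \<subseteq> span (B \<union> E)" by (rule span_minimal[OF _ subspace_span])
  then have "X \<subseteq> span (B \<union> E)" using assms(3) by blast
  then have "dim X \<le> card (B \<union> E)" using B(5) assms(2) by (intro dim_le_card) auto
  also have "\<dots> \<le> card B + card E" by (rule card_Un_le)
  finally show ?thesis using B(4) by simp
qed

lemma indep_extend_unit_vecs:
  assumes "independent B" "B \<subseteq> rspace n"
  shows "independent (B \<union> unit_vec ` {n..<n+l}) \<and> card (B \<union> unit_vec ` {n..<n+l}) = card B + l"
proof (induction l)
  case 0 then show ?case using assms by simp
next
  case (Suc l)
  let ?B = "B \<union> unit_vec ` {n..<n+l}"
  have fin: "finite ?B" using indep_rspace_bound[OF assms] by simp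
  have sub: "?B \<subseteq> rspace (n+l)"
    using assms(2) rspace_mono[of n "n+l"] by (auto simp: rspace_def unit_vec_def)
  have notr: "unit_vec (n+l) \<notin> rspace (n+l)"
    by (simp add: rspace_def unit_vec_def exI[of _ "n+l"])
  have nots: "unit_vec (n+l) \<notin> span ?B"
    using span_minimal[OF sub subspace_rspace] notr by blast
  have notin: "unit_vec (n+l) \<notin> ?B" using sub notr by blast
  have eq: "B \<union> unit_vec ` {n..<n + Suc l} = insert (unit_vec (n+l)) ?B"
    by (simp add: atLeastLessThanSuc)
  show ?case
    unfolding eq using Suc.IH nots notin fin by (simp add: independent_insertI)
qed

lemma affine_independent_card_le_dim:
  assumes a: "a \<in> X" and X: "X \<subseteq> rspace N"
    and T: "finite T" "T \<subseteq> X" "\<not> affine_dependent T"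
  shows "int (card T) - 1 \<le> int (dim ((\<lambda>x. x - a) ` X))"
proof (cases "T = {}")
  case True then show ?thesis by simp
next
  case False
  define D where "D = (\<lambda>x. x - a) ` X"
  have DN: "D \<subseteq> rspace N" using X a by (auto simp: D_def intro!: rspace_diff)
  obtain t where t: "t \<in> T" using False by auto
  let ?S = "(\<lambda>x. -t + x) ` (T - {t})"
  have ind: "independent ?S" using T(3) affine_dependent_iff_dependent2[OF t] by simp
  have "?S \<subseteq> span D"
  proof
    fix y assume "y \<in> ?S"
    then obtain x where x: "x \<in> T" "y = -t + x" by auto
    have "y = (x - a) - (t - a)" using x by simp
    moreover have "x - a \<in> span D" "t - a \<in> span D"
      using x t T(2) by (auto simp: D_def intro!: span_base)
    ultimately show "y \<in> span D" by (metis span_diff)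
  qed
  then have "card ?S \<le> dim D" by (rule card_le_dim[OF DN ind])
  moreover have "card ?S = card T - 1"
    by (subst card_image) (auto simp: inj_on_def T(1) t)
  moreover have "card T > 0" using t T(1) card_gt_0_iff by blast
  ultimately show ?thesis by (simp add: D_def)
qed

text \<open>Conversely a basis of X - a, translated back and together with a, is affinely
  independent of size 1 + dim (X - a).\<close>
lemma affine_independent_of_basis:
  assumes a: "a \<in> X" and X: "X \<subseteq> rspace N"
  obtains T where "finite T" "T \<subseteq> X" "\<not> affine_dependent T"
    "int (card T) - 1 = int (dim ((\<lambda>x. x - a) ` X))"
proof -
  define D where "D = (\<lambda>x. x - a) ` X"
  have DN: "D \<subseteq> rspace N" using X a by (auto simp: D_def intro!: rspace_diff)
  obtain B where B: "B \<subseteq> D" "independent B" "card B = dim D" "finite B"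
    using finite_basis_rspace[OF DN] by metis
  have a0: "a \<notin> (+) a ` B"
  proof
    assume "a \<in> (+) a ` B" then have "0 \<in> B" by auto
    with B(2) show False using dependent_zero by blast
  qed
  let ?T = "insert a ((+) a ` B)"
  have img: "(\<lambda>x. -a + x) ` ((+) a ` B) = B" by (auto simp: image_image)
  have "\<not> affine_dependent ?T"
    using affine_dependent_iff_dependent[OF a0] img B(2) by simp
  moreover have "?T \<subseteq> X" using B(1) a by (auto simp: D_def)
  moreover have "card ?T = card B + 1"
    using a0 B(4) by (simp add: card_image)
  moreover have "finite ?T" using B(4) by simp
  ultimately show ?thesis using that[of ?T] B(3) by (simp add: D_def)
qed

lemma affdim_dim:
  assumes a: "a \<in> X" and X: "X \<subseteq> rspace N"
  shows "affdim X = int (dim ((\<lambda>x. x - a) ` X))"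
proof -
  define M where "M = {int (card T) - 1 | T. finite T \<and> T \<subseteq> X \<and> \<not> affine_dependent T}"
  define d where "d = int (dim ((\<lambda>x. x - a) ` X))"
  have ub: "m \<le> d" if m: "m \<in> M" for m
  proof -
    obtain T where "m = int (card T) - 1" "finite T" "T \<subseteq> X" "\<not> affine_dependent T"
      using m by (auto simp: M_def)
    then show ?thesis using affine_independent_card_le_dim[OF a X, of T] by (simp add: d_def)
  qed
  obtain T where T: "finite T" "T \<subseteq> X" "\<not> affine_dependent T"
    "int (card T) - 1 = int (dim ((\<lambda>x. x - a) ` X))"
    by (rule affine_independent_of_basis[OF a X])
  have att: "d \<in> M"
    unfolding M_def d_def using T by (intro CollectI exI[of _ T]) simp
  have "M \<subseteq> {-1..d}"
  proof
    fix m assume "m \<in> M" then show "m \<in> {-1..d}" using ub[OF \<open>m \<in> M\<close>] by (auto simp: M_def)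
  qed
  then have "finite M" by (rule finite_subset) simp
  then have "Max M = d" using ub att by (intro Max_eqI) auto
  moreover have "X \<noteq> {}" using a by auto
  ultimately show ?thesis unfolding affdim_def M_def d_def by simp
qed

lemma affdim_empty: "affdim {} = -1"
  by (simp add: affdim_def)

lemma affdim_range:
  assumes "X \<subseteq> rspace N" shows "affdim X \<in> {-1..int N}"
proof (cases "X = {}")
  case True then show ?thesis by (simp add: affdim_empty)
next
  case False
  then obtain a where a: "a \<in> X" by auto
  have "(\<lambda>x. x - a) ` X \<subseteq> rspace N" using assms a by (auto intro!: rspace_diff)
  then have "dim ((\<lambda>x. x - a) ` X) \<le> N" by (rule dim_le_rspace)
  then show ?thesis using affdim_dim[OF a assms] by simp
qed

lemma affdim_singleton: "affdim {a} = 0"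
proof -
  have s: "T \<subseteq> {a} \<longleftrightarrow> T = {} \<or> T = {a}" for T :: "(nat \<Rightarrow> real) set" by auto
  have n1: "\<not> affine_dependent {a}" by (simp add: affine_dependent_def)
  have n0: "\<not> affine_dependent ({} :: (nat \<Rightarrow> real) set)" by (simp add: affine_dependent_def)
  have "{int (card T) - 1 | T. finite T \<and> T \<subseteq> {a} \<and> \<not> affine_dependent T} = {-1, 0}"
  proof (intro set_eqI iffI)
    fix m assume "m \<in> {int (card T) - 1 | T. finite T \<and> T \<subseteq> {a} \<and> \<not> affine_dependent T}"
    then show "m \<in> {-1, 0}" unfolding s by auto
  next
    fix m :: int assume "m \<in> {-1, 0}"
    then have "m = int (card ({}::(nat \<Rightarrow> real) set)) - 1 \<or> m = int (card {a}) - 1" by auto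
    then show "m \<in> {int (card T) - 1 | T. finite T \<and> T \<subseteq> {a} \<and> \<not> affine_dependent T}"
      using n0 n1 by blast
  qed
  then show ?thesis by (simp add: affdim_def)
qed

lemma pdim_finite:
  assumes "S \<subseteq> rspace N" shows "finite {affdim C | C. convex C \<and> C \<subseteq> S}"
proof (rule finite_subset)
  show "{affdim C | C. convex C \<and> C \<subseteq> S} \<subseteq> {-1..int N}"
    using affdim_range assms by blast
qed simp

lemma pdim_ge:
  assumes "S \<subseteq> rspace N" "convex C" "C \<subseteq> S" shows "affdim C \<le> pdim S"
  unfolding pdim_def using pdim_finite[OF assms(1)] assms(2,3) by (intro Max_ge) auto

lemma pdim_attained:
  assumes "S \<subseteq> rspace N" obtains C where "convex C" "C \<subseteq> S" "affdim C = pdim S"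
proof -
  have "pdim S \<in> {affdim C | C. convex C \<and> C \<subseteq> S}"
    unfolding pdim_def using pdim_finite[OF assms(1)] by (intro Max_in) auto
  then show ?thesis using that by auto
qed

lemma pdim_empty: "pdim {} = -1"
proof -
  have "{affdim C | C. convex C \<and> C \<subseteq> ({} :: (nat \<Rightarrow> real) set)} = {-1}"
    by (auto simp: affdim_empty)
  then show ?thesis by (simp add: pdim_def)
qed

lemma pdim_nonneg:
  assumes "S \<subseteq> rspace N" "a \<in> S" shows "0 \<le> pdim S"
  using pdim_ge[OF assms(1), of "{a}"] assms(2) affdim_singleton by simp

lemma dependent_inj_image:
  assumes lin: "linear (L :: (nat \<Rightarrow> real) \<Rightarrow> (nat \<Rightarrow> real))" and inj: "inj L"
    and d: "dependent Y"
  shows "dependent (L ` Y)"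
proof -
  obtain t u where tu: "finite t" "t \<subseteq> Y" "(\<Sum>v\<in>t. u v *\<^sub>R v) = 0" "\<exists>v\<in>t. u v \<noteq> 0"
    using d unfolding dependent_explicit by blast
  define u' where "u' = (\<lambda>y. u (inv L y))"
  have "(\<Sum>y\<in>L ` t. u' y *\<^sub>R y) = (\<Sum>v\<in>t. u v *\<^sub>R L v)"
    by (subst sum.reindex) (auto simp: u'_def inj_on_subset[OF inj] inv_f_f[OF inj])
  also have "\<dots> = L (\<Sum>v\<in>t. u v *\<^sub>R v)"
    by (simp add: linear_sum[OF lin] linear_scale[OF lin])
  also have "\<dots> = 0" using tu(3) linear_0[OF lin] by simp
  finally have "(\<Sum>y\<in>L ` t. u' y *\<^sub>R y) = 0" .
  moreover have "\<exists>y\<in>L ` t. u' y \<noteq> 0" using tu(4) by (auto simp: u'_def inv_f_f[OF inj])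
  ultimately show ?thesis unfolding dependent_explicit using tu(1,2) by blast
qed

lemma affine_dependent_inj_image:
  assumes lin: "linear (L :: (nat \<Rightarrow> real) \<Rightarrow> (nat \<Rightarrow> real))" and inj: "inj L"
  shows "affine_dependent (L ` T) \<longleftrightarrow> affine_dependent T"
proof (cases "T = {}")
  case True then show ?thesis by (simp add: affine_dependent_def)
next
  case False
  then obtain a where a: "a \<in> T" by auto
  have e1: "L ` T - {L a} = L ` (T - {a})" using inj by (simp add: image_set_diff)
  have "(\<lambda>x. - L a + x) ` (L ` (T - {a})) = (\<lambda>x. L (- a + x)) ` (T - {a})"
    unfolding image_image using linear_add[OF lin] linear_neg[OF lin] by metis
  then have eq: "(\<lambda>x. - L a + x) ` (L ` T - {L a}) = L ` ((\<lambda>x. - a + x) ` (T - {a}))"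
    unfolding e1 by (simp add: image_image)
  have "affine_dependent (L ` T) \<longleftrightarrow> dependent ((\<lambda>x. - L a + x) ` (L ` T - {L a}))"
    using a by (intro affine_dependent_iff_dependent2) auto
  also have "\<dots> \<longleftrightarrow> dependent ((\<lambda>x. - a + x) ` (T - {a}))"
    unfolding eq
  proof
    assume "dependent (L ` ((\<lambda>x. - a + x) ` (T - {a})))"
    then show "dependent ((\<lambda>x. - a + x) ` (T - {a}))"
      by (rule linear_dependent_inj_imageD[OF lin]) (rule inj_on_subset[OF inj], simp)
  qed (rule dependent_inj_image[OF lin inj])
  also have "\<dots> \<longleftrightarrow> affine_dependent T"
    using a by (intro affine_dependent_iff_dependent2[symmetric])
  finally show ?thesis .
qed

lemma affdim_linear_image:
  assumes lin: "linear L" and inj: "inj L"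
  shows "affdim (L ` X) = affdim X"
proof -
  have card_eq: "card (L ` T) = card T" for T
    using inj by (metis card_image inj_on_subset subset_UNIV)
  have "{int (card T) - 1 | T. finite T \<and> T \<subseteq> L ` X \<and> \<not> affine_dependent T} =
        {int (card T) - 1 | T. finite T \<and> T \<subseteq> X \<and> \<not> affine_dependent T}"
  proof (intro set_eqI iffI)
    fix m assume "m \<in> {int (card T) - 1 | T. finite T \<and> T \<subseteq> L ` X \<and> \<not> affine_dependent T}"
    then obtain T where T: "m = int (card T) - 1" "finite T" "T \<subseteq> L ` X" "\<not> affine_dependent T" by auto
    define T0 where "T0 = {x \<in> X. L x \<in> T}"
    have LT: "L ` T0 = T" using T(3) by (auto simp: T0_def)
    have "finite T0" using T(2) LT inj by (metis finite_imageD inj_on_subset subset_UNIV)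
    moreover have "\<not> affine_dependent T0" using T(4) LT affine_dependent_inj_image[OF lin inj] by metis
    ultimately show "m \<in> {int (card T) - 1 | T. finite T \<and> T \<subseteq> X \<and> \<not> affine_dependent T}"
      using T(1) card_eq[of T0] LT by (intro CollectI exI[of _ T0]) (auto simp: T0_def)
  next
    fix m assume "m \<in> {int (card T) - 1 | T. finite T \<and> T \<subseteq> X \<and> \<not> affine_dependent T}"
    then obtain T where T: "m = int (card T) - 1" "finite T" "T \<subseteq> X" "\<not> affine_dependent T" by auto
    then show "m \<in> {int (card T) - 1 | T. finite T \<and> T \<subseteq> L ` X \<and> \<not> affine_dependent T}"
      using card_eq[of T] affine_dependent_inj_image[OF lin inj, of T]
      by (intro CollectI exI[of _ "L ` T"]) auto
  qed
  then show ?thesis unfolding affdim_def by simp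
qed

lemma pdim_linear_image:
  assumes lin: "linear L" and inj: "inj L" and linv: "linear L'" and inv: "\<And>x. L (L' x) = x"
  shows "pdim (L ` X) = pdim X"
proof -
  have "{affdim C | C. convex C \<and> C \<subseteq> L ` X} = {affdim C | C. convex C \<and> C \<subseteq> X}"
  proof (intro set_eqI iffI)
    fix m assume "m \<in> {affdim C | C. convex C \<and> C \<subseteq> L ` X}"
    then obtain C where C: "m = affdim C" "convex C" "C \<subseteq> L ` X" by auto
    have CL: "C = L ` (L' ` C)" using inv by (auto simp: image_image)
    have "L' ` C \<subseteq> X"
    proof
      fix y assume "y \<in> L' ` C"
      then obtain c where c: "c \<in> C" "y = L' c" by auto
      then obtain x where x: "x \<in> X" "c = L x" using C(3) by auto
      have "L y = L x" using c x inv by simp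
      then show "y \<in> X" using inj x by (simp add: inj_eq)
    qed
    moreover have "convex (L' ` C)" using linv C(2) by (rule convex_linear_image)
    moreover have "affdim (L' ` C) = m" using C(1) CL affdim_linear_image[OF lin inj] by metis
    ultimately show "m \<in> {affdim C | C. convex C \<and> C \<subseteq> X}" by auto
  next
    fix m assume "m \<in> {affdim C | C. convex C \<and> C \<subseteq> X}"
    then obtain C where C: "m = affdim C" "convex C" "C \<subseteq> X" by auto
    then show "m \<in> {affdim C | C. convex C \<and> C \<subseteq> L ` X}"
      using affdim_linear_image[OF lin inj, of C] convex_linear_image[OF lin C(2)]
      by (intro CollectI exI[of _ "L ` C"]) auto
  qed
  then show ?thesis by (simp add: pdim_def)
qed

section \<open>Cylinders S x R^l\<close>

definition trunc :: "nat \<Rightarrow> (nat \<Rightarrow> real) \<Rightarrow> (nat \<Rightarrow> real)" where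
  "trunc n x = (\<lambda>i. if i < n then x i else 0)"

definition cyl :: "nat \<Rightarrow> nat \<Rightarrow> (nat \<Rightarrow> real) set \<Rightarrow> (nat \<Rightarrow> real) set" where
  "cyl n l S = {u \<in> rspace (n+l). trunc n u \<in> S}"

lemma linear_trunc: "linear (trunc n)"
  by (rule linearI) (auto simp: trunc_def scaleR_apply fun_eq_iff)

lemma trunc_rspace: "trunc n x \<in> rspace n"
  by (simp add: trunc_def rspace_def)

lemma trunc_id: "x \<in> rspace n \<Longrightarrow> trunc n x = x"
  by (auto simp: trunc_def rspace_def fun_eq_iff)

lemma convex_cyl: "convex C \<Longrightarrow> convex (cyl n l C)"
proof -
  assume C: "convex C"
  have "cyl n l C = rspace (n+l) \<inter> trunc n -` C" by (auto simp: cyl_def)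
  then show ?thesis
    using subspace_imp_convex[OF subspace_rspace] convex_linear_vimage[OF linear_trunc C]
    by (simp add: convex_Int)
qed

lemma rspace_split:
  assumes "u \<in> rspace (n+l)"
  shows "u = trunc n u + (\<Sum>i\<in>{n..<n+l}. u i *\<^sub>R unit_vec i)"
proof
  fix j
  show "u j = (trunc n u + (\<Sum>i\<in>{n..<n+l}. u i *\<^sub>R unit_vec i)) j"
  proof (cases "j < n")
    case True then show ?thesis
      by (simp add: trunc_def fun_sum_apply scaleR_apply unit_vec_def)
  next
    case False
    then have "(\<Sum>i\<in>{n..<n+l}. u i *\<^sub>R unit_vec i) j = (if j < n + l then u j else 0)"
      by (simp add: fun_sum_apply scaleR_apply unit_vec_def if_distrib cong: if_cong)
    then show ?thesis using False assms by (auto simp: trunc_def rspace_def)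
  qed
qed

lemma affdim_cyl_ge:
  assumes CN: "C \<subseteq> rspace n" and a: "a \<in> C"
  shows "affdim C + int l \<le> affdim (cyl n l C)"
proof -
  define C' where "C' = cyl n l C"
  have C'N: "C' \<subseteq> rspace (n+l)" by (auto simp: C'_def cyl_def)
  have CC': "C \<subseteq> C'" using CN rspace_mono[of n "n+l"] by (auto simp: C'_def cyl_def trunc_id)
  have aC': "a \<in> C'" using CC' a by auto
  define D where "D = (\<lambda>x. x - a) ` C"
  define D' where "D' = (\<lambda>x. x - a) ` C'"
  have DN: "D \<subseteq> rspace n" using CN a by (auto simp: D_def intro!: rspace_diff)
  have D'N: "D' \<subseteq> rspace (n+l)" using C'N aC' by (auto simp: D'_def intro!: rspace_diff)
  obtain B where B: "B \<subseteq> D" "independent B" "card B = dim D"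
    using finite_basis_rspace[OF DN] by metis
  have BN: "B \<subseteq> rspace n" using B(1) DN by auto
  have evD': "unit_vec ` {n..<n+l} \<subseteq> D'"
  proof
    fix y assume "y \<in> unit_vec ` {n..<n+l}"
    then obtain i where i: "n \<le> i" "i < n+l" "y = unit_vec i" by auto
    have "a + unit_vec i \<in> rspace (n+l)" using a CN i by (auto simp: rspace_def unit_vec_def)
    moreover have "trunc n (a + unit_vec i) = a"
      using a CN i by (auto simp: trunc_def fun_eq_iff unit_vec_def rspace_def)
    ultimately have "a + unit_vec i \<in> C'" using a by (simp add: C'_def cyl_def)
    then show "y \<in> D'" unfolding D'_def using i by (intro image_eqI[of _ _ "a + unit_vec i"]) auto
  qed
  have BD': "B \<subseteq> D'" using B(1) CC' by (auto simp: D_def D'_def)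
  from indep_extend_unit_vecs[OF B(2) BN, of l]
  have ind: "independent (B \<union> unit_vec ` {n..<n+l})"
    and cd: "card (B \<union> unit_vec ` {n..<n+l}) = card B + l" by auto
  have "card (B \<union> unit_vec ` {n..<n+l}) \<le> dim D'"
    using card_le_dim[OF D'N ind] BD' evD' span_superset by blast
  moreover have "affdim C = int (dim D)" using affdim_dim[OF a CN] by (simp add: D_def)
  moreover have "affdim C' = int (dim D')" using affdim_dim[OF aC' C'N] by (simp add: D'_def)
  ultimately show ?thesis using cd B(3) by (simp add: C'_def)
qed

lemma affdim_le_trunc:
  assumes C'N: "C' \<subseteq> rspace (n+l)" and a: "a \<in> C'"
  shows "affdim C' \<le> affdim (trunc n ` C') + int l"
proof -
  define D' where "D' = (\<lambda>x. x - a) ` C'"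
  define TD where "TD = (\<lambda>x. x - trunc n a) ` trunc n ` C'"
  have TDeq: "TD = trunc n ` D'"
    by (auto simp: TD_def D'_def image_image linear_diff[OF linear_trunc])
  have TDN: "TD \<subseteq> rspace n" by (auto simp: TDeq trunc_rspace)
  have spanD': "D' \<subseteq> span (TD \<union> unit_vec ` {n..<n+l})"
  proof
    fix u assume u: "u \<in> D'"
    have "u \<in> rspace (n+l)" using u C'N a by (auto simp: D'_def intro!: rspace_diff)
    then have "u = trunc n u + (\<Sum>i\<in>{n..<n+l}. u i *\<^sub>R unit_vec i)" by (rule rspace_split)
    moreover have "trunc n u \<in> span (TD \<union> unit_vec ` {n..<n+l})"
      using u by (intro span_base) (auto simp: TDeq)
    moreover have "(\<Sum>i\<in>{n..<n+l}. u i *\<^sub>R unit_vec i) \<in> span (TD \<union> unit_vec ` {n..<n+l})"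
      by (intro span_sum span_scale span_base) auto
    ultimately show "u \<in> span (TD \<union> unit_vec ` {n..<n+l})" by (metis span_add)
  qed
  have "dim D' \<le> dim TD + card (unit_vec ` {n..<n+l})"
    by (rule dim_union_le[OF TDN _ spanD']) simp
  moreover have "card (unit_vec ` {n..<n+l}) \<le> l"
    using card_image_le[of "{n..<n+l}" unit_vec] by simp
  moreover have "affdim C' = int (dim D')" using affdim_dim[OF a C'N] by (simp add: D'_def)
  moreover have "affdim (trunc n ` C') = int (dim TD)"
    unfolding TD_def by (rule affdim_dim) (use a trunc_rspace in auto)
  ultimately show ?thesis by linarith
qed

lemma pdim_cyl:
  assumes S: "S \<subseteq> rspace n" "S \<noteq> {}"
  shows "pdim (cyl n l S) = pdim S + int l"
proof (rule antisym)
  have QN: "cyl n l S \<subseteq> rspace (n+l)" by (auto simp: cyl_def)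
  obtain s where s: "s \<in> S" using S(2) by auto
  have p0: "0 \<le> pdim S" by (rule pdim_nonneg[OF S(1) s])
  obtain C where C: "convex C" "C \<subseteq> S" "affdim C = pdim S" using pdim_attained[OF S(1)] by metis
  then obtain a where a: "a \<in> C" using p0 affdim_empty by fastforce
  have "cyl n l C \<subseteq> cyl n l S" using C(2) by (auto simp: cyl_def)
  then show "pdim S + int l \<le> pdim (cyl n l S)"
    using affdim_cyl_ge[of C n a l] C S(1) a pdim_ge[OF QN convex_cyl[OF C(1)]] by force
  obtain C' where C': "convex C'" "C' \<subseteq> cyl n l S" "affdim C' = pdim (cyl n l S)"
    using pdim_attained[OF QN] by metis
  show "pdim (cyl n l S) \<le> pdim S + int l"
  proof (cases "C' = {}")
    case True then show ?thesis using C'(3) affdim_empty p0 by simp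
  next
    case False
    then obtain a where a: "a \<in> C'" by auto
    have "trunc n ` C' \<subseteq> S" using C'(2) by (auto simp: cyl_def)
    then have "affdim (trunc n ` C') \<le> pdim S"
      by (rule pdim_ge[OF S(1) convex_linear_image[OF linear_trunc C'(1)]])
    then show ?thesis using affdim_le_trunc[of C' n l a] C' QN a by force
  qed
qed

section \<open>Relabelling the exponents of a polynomial\<close>

definition reindex :: "('e \<Rightarrow> 'e) \<Rightarrow> ('e \<Rightarrow>\<^sub>0 'a::comm_monoid_add) \<Rightarrow> ('e \<Rightarrow>\<^sub>0 'a)" where
  "reindex \<phi> f = (\<Sum>\<alpha>\<in>Poly_Mapping.keys f. Poly_Mapping.single (\<phi> \<alpha>) (Poly_Mapping.lookup f \<alpha>))"

context
  fixes \<phi> \<psi> :: "'e \<Rightarrow> 'e"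
  assumes inv1: "\<And>a. \<psi> (\<phi> a) = a" and inv2: "\<And>b. \<phi> (\<psi> b) = b"
begin

lemma lookup_reindex: "Poly_Mapping.lookup (reindex \<phi> f) \<beta> = Poly_Mapping.lookup f (\<psi> \<beta>)"
proof -
  have "Poly_Mapping.lookup (reindex \<phi> f) \<beta> =
        (\<Sum>\<alpha>\<in>Poly_Mapping.keys f. (Poly_Mapping.lookup f \<alpha> when \<phi> \<alpha> = \<beta>))"
    by (simp add: reindex_def lookup_sum lookup_single)
  also have "\<dots> = (\<Sum>\<alpha>\<in>Poly_Mapping.keys f. (if \<alpha> = \<psi> \<beta> then Poly_Mapping.lookup f \<alpha> else 0))"
    by (rule sum.cong) (auto simp: when_def, (metis inv1 inv2)+)
  also have "\<dots> = Poly_Mapping.lookup f (\<psi> \<beta>)"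
    by (simp add: in_keys_iff)
  finally show ?thesis .
qed

lemma keys_reindex: "Poly_Mapping.keys (reindex \<phi> f) = \<phi> ` Poly_Mapping.keys f"
proof (intro set_eqI iffI)
  fix x assume "x \<in> Poly_Mapping.keys (reindex \<phi> f)"
  then have "\<psi> x \<in> Poly_Mapping.keys f" by (simp add: in_keys_iff lookup_reindex)
  then show "x \<in> \<phi> ` Poly_Mapping.keys f" using inv2[of x] by (metis image_eqI)
next
  fix x assume "x \<in> \<phi> ` Poly_Mapping.keys f"
  then show "x \<in> Poly_Mapping.keys (reindex \<phi> f)" by (auto simp: in_keys_iff lookup_reindex inv1)
qed

lemma reindex_sum: "reindex \<phi> (\<Sum>i\<in>I. F i) = (\<Sum>i\<in>I. reindex \<phi> (F i))"
  by (rule poly_mapping_eqI) (simp add: lookup_reindex lookup_sum)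

lemma reindex_single: "reindex \<phi> (Poly_Mapping.single a c) = Poly_Mapping.single (\<phi> a) c"
  by (rule poly_mapping_eqI) (auto simp: lookup_reindex lookup_single when_def, (metis inv1 inv2)+)

end

lemma reindex_inverse:
  assumes "\<And>a. \<psi> (\<phi> a) = a" "\<And>b. \<phi> (\<psi> b) = b"
  shows "reindex \<phi> (reindex \<psi> f) = f"
  by (rule poly_mapping_eqI) (simp add: lookup_reindex[OF assms] lookup_reindex[OF assms(2,1)] assms)

lemma monomial_expansion:
  "f = (\<Sum>\<alpha>\<in>Poly_Mapping.keys f. Poly_Mapping.single \<alpha> (Poly_Mapping.lookup f \<alpha>))"
proof -
  have "reindex (\<lambda>x. x) f = f"
    by (rule poly_mapping_eqI) (simp add: lookup_reindex[of "\<lambda>x. x" "\<lambda>x. x"])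
  then show ?thesis by (simp add: reindex_def)
qed

lemma mult_as_double_sum:
  fixes p q :: "('e::comm_monoid_add \<Rightarrow>\<^sub>0 'a::comm_ring_1)"
  shows "p * q = (\<Sum>a\<in>Poly_Mapping.keys p. \<Sum>b\<in>Poly_Mapping.keys q.
           Poly_Mapping.single (a + b) (Poly_Mapping.lookup p a * Poly_Mapping.lookup q b))"
  by (subst monomial_expansion[of p], subst monomial_expansion[of q]) (simp add: sum_product mult_single)

lemma reindex_mult:
  fixes f g :: "('e::comm_monoid_add \<Rightarrow>\<^sub>0 'a::comm_ring_1)"
  assumes inv1: "\<And>a. \<psi> (\<phi> a) = a" and inv2: "\<And>b. \<phi> (\<psi> b) = b"
    and add: "\<And>a b. \<phi> (a + b) = \<phi> a + \<phi> b"
  shows "reindex \<phi> (f * g) = reindex \<phi> f * reindex \<phi> g"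
proof -
  let ?F = "\<lambda>a. Poly_Mapping.single a (Poly_Mapping.lookup f a)"
  let ?G = "\<lambda>b. Poly_Mapping.single b (Poly_Mapping.lookup g b)"
  have "f * g = (\<Sum>a\<in>Poly_Mapping.keys f. \<Sum>b\<in>Poly_Mapping.keys g. ?F a * ?G b)"
    by (subst monomial_expansion[of f], subst monomial_expansion[of g]) (simp add: sum_product)
  then have "reindex \<phi> (f * g) = (\<Sum>a\<in>Poly_Mapping.keys f. \<Sum>b\<in>Poly_Mapping.keys g.
      Poly_Mapping.single (\<phi> a) (Poly_Mapping.lookup f a) * Poly_Mapping.single (\<phi> b) (Poly_Mapping.lookup g b))"
    by (simp add: reindex_sum[OF inv1 inv2] mult_single reindex_single[OF inv1 inv2] add)
  also have "\<dots> = reindex \<phi> f * reindex \<phi> g"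
    by (simp add: reindex_def sum_product)
  finally show ?thesis .
qed

lemma monomial_mult_reindex:
  fixes H :: "'a::comm_ring_1 lpoly"
  shows "Poly_Mapping.single \<mu> 1 * H = reindex (\<lambda>a. \<mu> + a) H"
  by (subst monomial_expansion[of H]) (simp add: sum_distrib_left mult_single reindex_def)

lemma keys_mult_subset:
  fixes p q :: "('e::comm_monoid_add \<Rightarrow>\<^sub>0 'a::comm_ring_1)"
  shows "Poly_Mapping.keys (p * q) \<subseteq> {a + b | a b. a \<in> Poly_Mapping.keys p \<and> b \<in> Poly_Mapping.keys q}"
proof
  fix x assume "x \<in> Poly_Mapping.keys (p * q)"
  then obtain a b where "a \<in> Poly_Mapping.keys p" "b \<in> Poly_Mapping.keys q"
    "x \<in> Poly_Mapping.keys (Poly_Mapping.single (a + b) (Poly_Mapping.lookup p a * Poly_Mapping.lookup q b))"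
    unfolding mult_as_double_sum by (blast dest: subsetD[OF keys_sum])
  then show "x \<in> {a + b | a b. a \<in> Poly_Mapping.keys p \<and> b \<in> Poly_Mapping.keys q}"
    by (auto split: if_splits)
qed

lemma keys_sum_mult_supported:
  fixes G f :: "nat \<Rightarrow> 'a::comm_ring_1 lpoly"
  assumes "\<forall>i<k. \<forall>\<alpha>\<in>Poly_Mapping.keys (G i). \<forall>j\<ge>N. Poly_Mapping.lookup \<alpha> j = 0"
    and "\<forall>i<k. \<forall>\<alpha>\<in>Poly_Mapping.keys (f i). \<forall>j\<ge>N. Poly_Mapping.lookup \<alpha> j = 0"
  shows "\<forall>\<alpha>\<in>Poly_Mapping.keys (\<Sum>i<k. G i * f i). \<forall>j\<ge>N. Poly_Mapping.lookup \<alpha> j = 0"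
proof (intro ballI allI impI)
  fix \<alpha> j assume a: "\<alpha> \<in> Poly_Mapping.keys (\<Sum>i<k. G i * f i)" and j: "N \<le> j"
  obtain i where i: "i < k" and ai: "\<alpha> \<in> Poly_Mapping.keys (G i * f i)"
    using subsetD[OF keys_sum a] by blast
  then obtain a b where "\<alpha> = a + b" "a \<in> Poly_Mapping.keys (G i)" "b \<in> Poly_Mapping.keys (f i)"
    using keys_mult_subset by blast
  then show "Poly_Mapping.lookup \<alpha> j = 0" using assms i j by (simp add: lookup_add)
qed

section \<open>The substitution x_i -> x_i * prod_j lambda_j^(v_j i)\<close>

definition lambda_shift :: "nat \<Rightarrow> nat \<Rightarrow> (nat \<Rightarrow> nat \<Rightarrow> int) \<Rightarrow> (nat \<Rightarrow>\<^sub>0 int) \<Rightarrow> (nat \<Rightarrow>\<^sub>0 int)" where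
  "lambda_shift n l v \<alpha> = (\<Sum>j<l. Poly_Mapping.single (n + j) (\<Sum>i<n. Poly_Mapping.lookup \<alpha> i * v j i))"

definition tilde_exp_inv :: "nat \<Rightarrow> nat \<Rightarrow> (nat \<Rightarrow> nat \<Rightarrow> int) \<Rightarrow> (nat \<Rightarrow>\<^sub>0 int) \<Rightarrow> (nat \<Rightarrow>\<^sub>0 int)" where
  "tilde_exp_inv n l v \<alpha> = \<alpha> - lambda_shift n l v \<alpha>"

lemma tilde_exp_shift: "tilde_exp n l v \<alpha> = \<alpha> + lambda_shift n l v \<alpha>"
  by (simp add: tilde_exp_def lambda_shift_def)

lemma lookup_lambda_shift: "Poly_Mapping.lookup (lambda_shift n l v \<alpha>) i =
   (if n \<le> i \<and> i < n + l then (\<Sum>c<n. Poly_Mapping.lookup \<alpha> c * v (i - n) c) else 0)"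
proof (cases "n \<le> i \<and> i < n + l")
  case True
  have "Poly_Mapping.lookup (lambda_shift n l v \<alpha>) i =
        (\<Sum>j<l. if j = i - n then (\<Sum>c<n. Poly_Mapping.lookup \<alpha> c * v j c) else 0)"
    unfolding lambda_shift_def lookup_sum using True
    by (intro sum.cong) (auto simp: lookup_single when_def)
  moreover have "i - n < l" using True by arith
  ultimately show ?thesis using True by simp
next
  case False
  then show ?thesis
    by (auto simp: lambda_shift_def lookup_sum lookup_single when_def intro!: sum.neutral)
qed

lemma lambda_shift_cong:
  "(\<And>i. i < n \<Longrightarrow> Poly_Mapping.lookup \<alpha> i = Poly_Mapping.lookup \<beta> i) \<Longrightarrow>
   lambda_shift n l v \<alpha> = lambda_shift n l v \<beta>"
  unfolding lambda_shift_def by (intro sum.cong refl arg_cong[where f="Poly_Mapping.single _"]) simp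

lemma lambda_shift_add: "lambda_shift n l v (\<alpha> + \<beta>) = lambda_shift n l v \<alpha> + lambda_shift n l v \<beta>"
  by (rule poly_mapping_eqI) (simp add: lookup_lambda_shift lookup_add sum.distrib distrib_right)

lemma lambda_shift_idem: "lambda_shift n l v (lambda_shift n l v \<alpha>) = 0"
proof -
  have "lambda_shift n l v (lambda_shift n l v \<alpha>) = lambda_shift n l v 0"
    by (rule lambda_shift_cong) (simp add: lookup_lambda_shift)
  then show ?thesis by (simp add: lambda_shift_def)
qed

lemma tilde_exp_inv_left: "tilde_exp_inv n l v (tilde_exp n l v \<alpha>) = \<alpha>"
  by (simp add: tilde_exp_inv_def tilde_exp_shift lambda_shift_add lambda_shift_idem)

lemma tilde_exp_inv_right: "tilde_exp n l v (tilde_exp_inv n l v \<alpha>) = \<alpha>"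
proof -
  have "lambda_shift n l v (tilde_exp_inv n l v \<alpha>) = lambda_shift n l v \<alpha>"
    by (rule lambda_shift_cong) (simp add: tilde_exp_inv_def lookup_minus lookup_lambda_shift)
  then show ?thesis by (simp add: tilde_exp_shift tilde_exp_inv_def)
qed

lemma tilde_exp_add: "tilde_exp n l v (\<alpha> + \<beta>) = tilde_exp n l v \<alpha> + tilde_exp n l v \<beta>"
  by (simp add: tilde_exp_shift lambda_shift_add algebra_simps)

lemma inj_tilde_exp: "inj_on (tilde_exp n l v) X"
  by (metis inj_on_inverseI tilde_exp_inv_left)

lemma lookup_tilde_exp: "Poly_Mapping.lookup (tilde_exp n l v \<alpha>) i = Poly_Mapping.lookup \<alpha> i +
   (if n \<le> i \<and> i < n + l then (\<Sum>c<n. Poly_Mapping.lookup \<alpha> c * v (i - n) c) else 0)"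
  by (simp add: tilde_exp_shift lookup_add lookup_lambda_shift)

lemma tilde_reindex: "tilde n l v f = reindex (tilde_exp n l v) f"
  by (simp add: tilde_def reindex_def)

lemmas tilde_exp_inverse = tilde_exp_inv_left tilde_exp_inv_right

lemma lookup_tilde: "Poly_Mapping.lookup (tilde n l v f) \<beta> = Poly_Mapping.lookup f (tilde_exp_inv n l v \<beta>)"
  unfolding tilde_reindex by (rule lookup_reindex[where \<psi>="tilde_exp_inv n l v"]) (simp_all add: tilde_exp_inverse)

lemma keys_tilde: "Poly_Mapping.keys (tilde n l v f) = tilde_exp n l v ` Poly_Mapping.keys f"
  unfolding tilde_reindex by (rule keys_reindex[where \<psi>="tilde_exp_inv n l v"]) (simp_all add: tilde_exp_inverse)

lemma tilde_sum: "tilde n l v (\<Sum>i\<in>I. F i) = (\<Sum>i\<in>I. tilde n l v (F i))"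
  unfolding tilde_reindex by (rule reindex_sum[where \<psi>="tilde_exp_inv n l v"]) (simp_all add: tilde_exp_inverse)

lemma tilde_mult:
  fixes f g :: "'a::comm_ring_1 lpoly"
  shows "tilde n l v (f * g) = tilde n l v f * tilde n l v g"
  unfolding tilde_reindex by (rule reindex_mult[where \<psi>="tilde_exp_inv n l v"]) (simp_all add: tilde_exp_inverse tilde_exp_add)

lemma tilde_surj: "tilde n l v (reindex (tilde_exp_inv n l v) g) = g"
  unfolding tilde_reindex by (rule reindex_inverse) (simp_all add: tilde_exp_inverse)

lemma lpoly_in_tilde_inv:
  assumes "lpoly_in n (n + l) g"
  shows "lpoly_in n (n + l) (reindex (tilde_exp_inv n l v) g)"
proof -
  have ks: "Poly_Mapping.keys (reindex (tilde_exp_inv n l v) g) = tilde_exp_inv n l v ` Poly_Mapping.keys g"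
    by (rule keys_reindex[where \<psi>="tilde_exp n l v"]) (simp_all add: tilde_exp_inverse)
  show ?thesis
    using assms by (auto simp: ks lpoly_in_def tilde_exp_inv_def lookup_minus lookup_lambda_shift)
qed

section \<open>Tropical hypersurfaces under relabelling of exponents\<close>

text \<open>The linear map on weights dual to the substitution: tilde_exp alpha . w = alpha . weight_change w.\<close>
definition weight_change :: "nat \<Rightarrow> nat \<Rightarrow> (nat \<Rightarrow> nat \<Rightarrow> int) \<Rightarrow> (nat \<Rightarrow> real) \<Rightarrow> (nat \<Rightarrow> real)" where
  "weight_change n l v w = (\<lambda>i. if i < n then w i + (\<Sum>j<l. real_of_int (v j i) * w (n + j)) else w i)"

definition weight_change_inv :: "nat \<Rightarrow> nat \<Rightarrow> (nat \<Rightarrow> nat \<Rightarrow> int) \<Rightarrow> (nat \<Rightarrow> real) \<Rightarrow> (nat \<Rightarrow> real)" where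
  "weight_change_inv n l v w = (\<lambda>i. if i < n then w i - (\<Sum>j<l. real_of_int (v j i) * w (n + j)) else w i)"

lemma weight_change_inverse:
  "weight_change n l v (weight_change_inv n l v w) = w"
  "weight_change_inv n l v (weight_change n l v w) = w"
  by (auto simp: weight_change_def weight_change_inv_def fun_eq_iff)

lemma linear_weight_change: "linear (weight_change n l v)"
  by (rule linearI) (auto simp: weight_change_def scaleR_apply fun_eq_iff sum.distrib sum_distrib_left algebra_simps)

lemma linear_weight_change_inv: "linear (weight_change_inv n l v)"
  by (rule linearI) (auto simp: weight_change_inv_def scaleR_apply fun_eq_iff sum.distrib sum_distrib_left algebra_simps)

lemma weight_change_rspace: "weight_change n l v w \<in> rspace (n + l) \<longleftrightarrow> w \<in> rspace (n + l)"
  by (auto simp: weight_change_def rspace_def)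

lemma sum_split_at: "(\<Sum>i<n+l. g i) = (\<Sum>i<n. g i) + (\<Sum>j<l. g (n + j))" for n l :: nat
  by (induction l) (simp_all add: add.assoc)

lemma dotp_tilde_exp: "dotp (n + l) (tilde_exp n l v \<alpha>) w = dotp (n + l) \<alpha> (weight_change n l v w)"
proof -
  let ?a = "\<lambda>i. real_of_int (Poly_Mapping.lookup \<alpha> i)"
  have "dotp (n + l) (tilde_exp n l v \<alpha>) w =
      (\<Sum>i<n. ?a i * w i) + (\<Sum>j<l. (?a (n+j) + (\<Sum>c<n. ?a c * real_of_int (v j c))) * w (n + j))"
    unfolding dotp_def sum_split_at by (simp add: lookup_tilde_exp of_int_sum)
  also have "\<dots> = (\<Sum>i<n. ?a i * w i) + (\<Sum>j<l. ?a (n+j) * w (n+j)) +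
      (\<Sum>j<l. \<Sum>c<n. ?a c * real_of_int (v j c) * w (n + j))"
    by (simp add: distrib_right sum.distrib sum_distrib_right)
  also have "\<dots> = (\<Sum>i<n. ?a i * (w i + (\<Sum>j<l. real_of_int (v j i) * w (n + j)))) + (\<Sum>j<l. ?a (n+j) * w (n+j))"
    by (simp add: distrib_left sum.distrib sum_distrib_left sum.swap[of _ "{..<l}"] mult.assoc)
  also have "\<dots> = dotp (n + l) \<alpha> (weight_change n l v w)"
    unfolding dotp_def sum_split_at by (simp add: weight_change_def)
  finally show ?thesis .
qed

lemma dotp_add: "dotp N (\<alpha> + \<beta>) w = dotp N \<alpha> w + dotp N \<beta> w"
  by (simp add: dotp_def lookup_add distrib_right sum.distrib)

lemma dotp_trunc:
  assumes "\<forall>i\<ge>n. Poly_Mapping.lookup \<alpha> i = 0" "n \<le> N"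
  shows "dotp N \<alpha> w = dotp n \<alpha> (trunc n w)"
proof -
  have "dotp N \<alpha> w = (\<Sum>i<n. real_of_int (Poly_Mapping.lookup \<alpha> i) * w i)"
    unfolding dotp_def using assms by (intro sum.mono_neutral_right) auto
  also have "\<dots> = dotp n \<alpha> (trunc n w)" unfolding dotp_def trunc_def by simp
  finally show ?thesis .
qed

definition trop_cond :: "('a::zero \<Rightarrow> real) \<Rightarrow> nat \<Rightarrow> 'a lpoly \<Rightarrow> (nat \<Rightarrow> real) \<Rightarrow> bool" where
  "trop_cond val N f w \<longleftrightarrow> f = 0 \<or>
     (\<exists>\<alpha>\<in>Poly_Mapping.keys f. \<exists>\<beta>\<in>Poly_Mapping.keys f. \<alpha> \<noteq> \<beta> \<and> tw val N f w \<alpha> = tw val N f w \<beta> \<and>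
        (\<forall>\<gamma>\<in>Poly_Mapping.keys f. tw val N f w \<alpha> \<le> tw val N f w \<gamma>))"

lemma trop_hyp_trop_cond: "trop_hyp val N f = {w \<in> rspace N. trop_cond val N f w}"
  by (simp add: trop_hyp_def trop_cond_def)

text \<open>Transfer principle: if g arises from f by an injective relabelling of exponents that
  changes every tropical term by the same constant c, then T(g) at w is T(f) at w'.\<close>
locale trop_relabel =
  fixes \<phi> :: "(nat \<Rightarrow>\<^sub>0 int) \<Rightarrow> (nat \<Rightarrow>\<^sub>0 int)" and f g :: "'a::zero lpoly"
    and N M :: nat and w w' :: "nat \<Rightarrow> real" and c :: real
  assumes inj: "inj_on \<phi> (Poly_Mapping.keys f)"
    and keys: "Poly_Mapping.keys g = \<phi> ` Poly_Mapping.keys f"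
    and look: "\<And>\<alpha>. \<alpha> \<in> Poly_Mapping.keys f \<Longrightarrow> Poly_Mapping.lookup g (\<phi> \<alpha>) = Poly_Mapping.lookup f \<alpha>"
    and dot: "\<And>\<alpha>. \<alpha> \<in> Poly_Mapping.keys f \<Longrightarrow> dotp N (\<phi> \<alpha>) w = dotp M \<alpha> w' + c"
begin

lemma tw_relabel: "\<alpha> \<in> Poly_Mapping.keys f \<Longrightarrow> tw val N g w (\<phi> \<alpha>) = tw val M f w' \<alpha> + c"
  using look dot by (simp add: tw_def)

lemma trop_cond_relabel: "trop_cond val N g w \<longleftrightarrow> trop_cond val M f w'"
proof -
  have z: "g = 0 \<longleftrightarrow> f = 0"
    using keys by (metis image_is_empty keys_eq_empty)
  have "(\<exists>\<alpha>\<in>Poly_Mapping.keys g. \<exists>\<beta>\<in>Poly_Mapping.keys g. \<alpha> \<noteq> \<beta> \<and> tw val N g w \<alpha> = tw val N g w \<beta> \<and>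
        (\<forall>\<gamma>\<in>Poly_Mapping.keys g. tw val N g w \<alpha> \<le> tw val N g w \<gamma>)) \<longleftrightarrow>
       (\<exists>\<alpha>\<in>Poly_Mapping.keys f. \<exists>\<beta>\<in>Poly_Mapping.keys f. \<alpha> \<noteq> \<beta> \<and> tw val M f w' \<alpha> = tw val M f w' \<beta> \<and>
        (\<forall>\<gamma>\<in>Poly_Mapping.keys f. tw val M f w' \<alpha> \<le> tw val M f w' \<gamma>))"
    unfolding keys using inj tw_relabel by (auto simp: inj_on_eq_iff)
  then show ?thesis unfolding trop_cond_def z by simp
qed

lemma init_set_relabel: "init_set val N g w = \<phi> ` init_set val M f w'"
  unfolding init_set_def keys using tw_relabel by auto

end

lemma trop_relabel_tilde: "trop_relabel (tilde_exp n l v) f (tilde n l v f) (n + l) (n + l) w (weight_change n l v w) 0"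
  by unfold_locales (simp_all add: keys_tilde lookup_tilde tilde_exp_inverse dotp_tilde_exp inj_tilde_exp)

lemma trop_relabel_trunc:
  assumes "lpoly_in p n f" "n \<le> N"
  shows "trop_relabel (\<lambda>x. x) f f N n w (trunc n w) 0"
  by unfold_locales (use assms in \<open>auto simp: lpoly_in_def intro!: dotp_trunc\<close>)

lemma trop_cond_monomial_mult:
  fixes H :: "'a::comm_ring_1 lpoly"
  shows "trop_cond val N (Poly_Mapping.single \<mu> 1 * H) w \<longleftrightarrow> trop_cond val N H w"
proof -
  have "trop_relabel (\<lambda>a. \<mu> + a) H (reindex (\<lambda>a. \<mu> + a) H) N N w w (dotp N \<mu> w)"
    by unfold_locales (simp_all add: keys_reindex[where \<psi>="\<lambda>a. - \<mu> + a"]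
        lookup_reindex[where \<psi>="\<lambda>a. - \<mu> + a"] dotp_add inj_on_def)
  then show ?thesis by (simp add: monomial_mult_reindex trop_relabel.trop_cond_relabel)
qed

lemma trop_hyp_tilde:
  assumes "lpoly_in p n f"
  shows "w \<in> trop_hyp val (n + l) (tilde n l v f) \<longleftrightarrow>
         w \<in> rspace (n + l) \<and> trunc n (weight_change n l v w) \<in> trop_hyp val n f"
proof -
  have "trop_cond val (n + l) (tilde n l v f) w \<longleftrightarrow> trop_cond val (n + l) f (weight_change n l v w)"
    by (rule trop_relabel.trop_cond_relabel[OF trop_relabel_tilde])
  also have "\<dots> \<longleftrightarrow> trop_cond val n f (trunc n (weight_change n l v w))"
    by (rule trop_relabel.trop_cond_relabel[OF trop_relabel_trunc[OF assms le_add1]])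
  finally show ?thesis by (simp add: trop_hyp_trop_cond trunc_rspace)
qed

lemma trop_inter_tilde_mem:
  assumes "\<forall>j\<in>J. lpoly_in p n (f j)"
  shows "w \<in> trop_inter val (n + l) (\<lambda>i. tilde n l v (f i)) J \<longleftrightarrow>
         w \<in> rspace (n + l) \<and> trunc n (weight_change n l v w) \<in> trop_inter val n f J"
  using assms trop_hyp_tilde[of p n _ w val l v] by (auto simp: trop_inter_def trunc_rspace)

lemma trop_inter_tilde:
  assumes "\<forall>j\<in>J. lpoly_in p n (f j)"
  shows "trop_inter val (n + l) (\<lambda>i. tilde n l v (f i)) J =
         weight_change_inv n l v ` cyl n l (trop_inter val n f J)"
proof (intro set_eqI iffI)
  fix w assume "w \<in> trop_inter val (n + l) (\<lambda>i. tilde n l v (f i)) J"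
  then have "weight_change n l v w \<in> cyl n l (trop_inter val n f J)"
    using trop_inter_tilde_mem[OF assms] weight_change_rspace by (auto simp: cyl_def)
  then show "w \<in> weight_change_inv n l v ` cyl n l (trop_inter val n f J)"
    by (rule image_eqI[rotated]) (simp add: weight_change_inverse)
next
  fix w assume "w \<in> weight_change_inv n l v ` cyl n l (trop_inter val n f J)"
  then obtain u where u: "u \<in> rspace (n + l)" "trunc n u \<in> trop_inter val n f J"
    and w: "w = weight_change_inv n l v u" by (auto simp: cyl_def)
  have wu: "weight_change n l v w = u" by (simp add: w weight_change_inverse)
  then have "w \<in> rspace (n + l) \<and> trunc n (weight_change n l v w) \<in> trop_inter val n f J"
    using u weight_change_rspace[of n l v w] by simp
  then show "w \<in> trop_inter val (n + l) (\<lambda>i. tilde n l v (f i)) J"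
    using trop_inter_tilde_mem[OF assms] by blast
qed

definition exp_change :: "nat \<Rightarrow> nat \<Rightarrow> (nat \<Rightarrow> nat \<Rightarrow> int) \<Rightarrow> (nat \<Rightarrow> real) \<Rightarrow> (nat \<Rightarrow> real)" where
  "exp_change n l v x = (\<lambda>i. x i + (if n \<le> i \<and> i < n + l then (\<Sum>c<n. x c * real_of_int (v (i - n) c)) else 0))"

lemma linear_exp_change: "linear (exp_change n l v)"
  by (rule linearI) (auto simp: exp_change_def scaleR_apply fun_eq_iff sum.distrib sum_distrib_left algebra_simps)

lemma inj_exp_change: "inj (exp_change n l v)"
proof (rule injI)
  fix x y assume eq: "exp_change n l v x = exp_change n l v y"
  have "x i = y i" if "i < n" for i
    using fun_cong[OF eq, of i] that by (simp add: exp_change_def)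
  then have s: "(\<Sum>c<n. x c * real_of_int (v (i - n) c)) = (\<Sum>c<n. y c * real_of_int (v (i - n) c))" for i
    by (intro sum.cong) auto
  show "x = y"
  proof
    fix i show "x i = y i" using fun_cong[OF eq, of i] s[of i] by (auto simp: exp_change_def split: if_splits)
  qed
qed

lemma expvec_tilde_exp: "expvec (tilde_exp n l v \<alpha>) = exp_change n l v (expvec \<alpha>)"
  by (auto simp: expvec_def exp_change_def lookup_tilde_exp fun_eq_iff of_int_sum)

lemma expvec_tilde_exp_image: "expvec ` tilde_exp n l v ` X = exp_change n l v ` expvec ` X"
  by (simp add: image_image expvec_tilde_exp)

lemma newton_tilde: "newton (tilde n l v f) = exp_change n l v ` newton f"
  unfolding newton_def keys_tilde expvec_tilde_exp_image
  by (rule convex_hull_linear_image[OF linear_exp_change, symmetric])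

lemma dual_cell_tilde:
  assumes "lpoly_in p n f"
  shows "dual_cell val (n + l) (tilde n l v f) w =
         exp_change n l v ` dual_cell val n f (trunc n (weight_change n l v w))"
  unfolding dual_cell_def trop_relabel.init_set_relabel[OF trop_relabel_tilde]
    trop_relabel.init_set_relabel[OF trop_relabel_trunc[OF assms le_add1]] image_ident expvec_tilde_exp_image
  by (rule convex_hull_linear_image[OF linear_exp_change, symmetric])

lemma msum_cong: "(\<And>j. j \<in> J \<Longrightarrow> C j = C' j) \<Longrightarrow> msum J C = msum J C'"
  by (simp add: msum_def)

lemma msum_linear_image:
  assumes lin: "linear L"
  shows "msum J (\<lambda>j. L ` C j) = L ` msum J C"
proof (intro set_eqI iffI)
  fix y assume "y \<in> msum J (\<lambda>j. L ` C j)"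
  then obtain x where x: "y = (\<Sum>j\<in>J. x j)" "\<forall>j\<in>J. x j \<in> L ` C j" by (auto simp: msum_def)
  then have "\<forall>j\<in>J. \<exists>z. z \<in> C j \<and> x j = L z" by blast
  then obtain z where z: "\<forall>j\<in>J. z j \<in> C j \<and> x j = L (z j)" by metis
  have "y = L (\<Sum>j\<in>J. z j)" using x(1) z by (simp add: linear_sum[OF lin])
  then show "y \<in> L ` msum J C" using z by (auto simp: msum_def)
next
  fix y assume "y \<in> L ` msum J C"
  then obtain x where x: "y = L (\<Sum>j\<in>J. x j)" "\<forall>j\<in>J. x j \<in> C j" by (auto simp: msum_def)
  then show "y \<in> msum J (\<lambda>j. L ` C j)"
    by (auto simp: msum_def linear_sum[OF lin] intro!: exI[of _ "\<lambda>j. L (x j)"])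
qed

section \<open>Parts (a) and (b): properness and transversality\<close>

lemma trop_inter_rspace: "trop_inter val N f J \<subseteq> rspace N"
  by (auto simp: trop_inter_def)

text \<open>A proper intersection of at most n hypersurfaces in R^n stays proper: its
  dimension grows by exactly l.\<close>
lemma proper_int_tilde:
  assumes lp: "\<forall>j\<in>J. lpoly_in p n (f j)" and cJ: "card J \<le> n"
    and pr: "proper_int val n f J"
  shows "proper_int val (n + l) (\<lambda>i. tilde n l v (f i)) J"
proof -
  define S where "S = trop_inter val n f J"
  have SN: "S \<subseteq> rspace n" by (simp add: S_def trop_inter_rspace)
  have pS: "pdim S = int n - int (card J)" using pr by (simp add: proper_int_def S_def)
  then have "S \<noteq> {}" using cJ pdim_empty by force
  have "pdim (trop_inter val (n + l) (\<lambda>i. tilde n l v (f i)) J) = pdim (cyl n l S)"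
    unfolding trop_inter_tilde[OF lp] S_def
    by (rule pdim_linear_image[OF linear_weight_change_inv _ linear_weight_change weight_change_inverse(2)])
       (metis injI weight_change_inverse(1))
  also have "\<dots> = pdim S + int l" by (rule pdim_cyl[OF SN \<open>S \<noteq> {}\<close>])
  finally show ?thesis using pS by (simp add: proper_int_def)
qed

text \<open>Transversality along every cell is preserved, since exp_change is injective and linear.\<close>
lemma transversal_cells_tilde:
  assumes lp: "\<forall>j\<in>J. lpoly_in p n (f j)" and tr: "transversal_cells val n f J"
  shows "transversal_cells val (n + l) (\<lambda>i. tilde n l v (f i)) J"
  unfolding transversal_cells_def
proof
  fix w assume w: "w \<in> trop_inter val (n + l) (\<lambda>i. tilde n l v (f i)) J"
  define u where "u = trunc n (weight_change n l v w)"
  let ?E = "exp_change n l v"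
  have u: "u \<in> trop_inter val n f J" using w trop_inter_tilde_mem[OF lp] by (simp add: u_def)
  have dj: "dual_cell val (n + l) (tilde n l v (f j)) w = ?E ` dual_cell val n (f j) u"
    if "j \<in> J" for j
    unfolding u_def by (rule dual_cell_tilde) (use lp that in auto)
  note affdim_E = affdim_linear_image[OF linear_exp_change inj_exp_change]
  have "affdim (msum J (\<lambda>j. dual_cell val (n + l) (tilde n l v (f j)) w)) =
        affdim (msum J (\<lambda>j. ?E ` dual_cell val n (f j) u))"
    using dj by (simp cong: msum_cong)
  also have "\<dots> = affdim (msum J (\<lambda>j. dual_cell val n (f j) u))"
    by (simp add: msum_linear_image[OF linear_exp_change] affdim_E)
  also have "\<dots> = (\<Sum>j\<in>J. affdim (dual_cell val n (f j) u))"
    using tr u by (simp add: transversal_cells_def)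
  also have "\<dots> = (\<Sum>j\<in>J. affdim (dual_cell val (n + l) (tilde n l v (f j)) w))"
    by (intro sum.cong refl) (simp add: dj affdim_E)
  finally show "affdim (msum J (\<lambda>j. dual_cell val (n + l) (tilde n l v (f j)) w)) =
        (\<Sum>j\<in>J. affdim (dual_cell val (n + l) (tilde n l v (f j)) w))" .
qed

lemma transversal_tilde:
  assumes fp: "\<forall>i<k. lpoly_in n n (f i)" and kn: "k \<le> n"
    and tr: "transversal val n f k"
  shows "transversal val (n + l) (\<lambda>i. tilde n l v (f i)) k"
  unfolding transversal_def
proof (intro allI impI conjI)
  fix J assume J: "J \<subseteq> {..<k}" "2 \<le> card J"
  have lp: "\<forall>j\<in>J. lpoly_in n n (f j)" using J(1) fp by auto
  have "card J \<le> n" using card_mono[OF _ J(1)] kn by simp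
  with tr J lp show "proper_int val (n + l) (\<lambda>i. tilde n l v (f i)) J"
    "transversal_cells val (n + l) (\<lambda>i. tilde n l v (f i)) J"
    by (auto simp: transversal_def intro: proper_int_tilde transversal_cells_tilde)
qed

section \<open>Part (c): Newton-nondegeneracy\<close>

lemma prod_power_int_distrib:
  fixes f :: "'b \<Rightarrow> 'a::field"
  shows "(\<Prod>i\<in>A. f i) powi k = (\<Prod>i\<in>A. f i powi k)"
  by (induction A rule: infinite_finite_induct) (simp_all add: power_int_mult_distrib)

lemma power_int_sum_exp:
  fixes x :: "'a::field"
  assumes "x \<noteq> 0"
  shows "x powi (\<Sum>i\<in>A. g i) = (\<Prod>i\<in>A. x powi g i)"
  by (induction A rule: infinite_finite_induct) (simp_all add: power_int_add assms)

lemma prod_split_at: "(\<Prod>i<n+l. h i) = (\<Prod>i<n. h i) * (\<Prod>j<l. h (n + j))" for n l :: nat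
  by (induction l) (simp_all add: add.assoc mult.assoc)

lemma monomial_tilde_eval:
  fixes z :: "nat \<Rightarrow> 'b::field"
  assumes a0: "\<forall>i\<ge>n. Poly_Mapping.lookup \<alpha> i = 0" and z: "\<forall>j<l. z (n + j) \<noteq> 0"
  shows "(\<Prod>i<n + l. z i powi Poly_Mapping.lookup (tilde_exp n l v \<alpha>) i) =
         (\<Prod>c<n. (z c * (\<Prod>j<l. z (n + j) powi v j c)) powi Poly_Mapping.lookup \<alpha> c)"
proof -
  have "(\<Prod>i<n + l. z i powi Poly_Mapping.lookup (tilde_exp n l v \<alpha>) i) =
        (\<Prod>i<n. z i powi Poly_Mapping.lookup \<alpha> i) *
        (\<Prod>j<l. z (n + j) powi (\<Sum>c<n. Poly_Mapping.lookup \<alpha> c * v j c))"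
    unfolding prod_split_at by (simp add: lookup_tilde_exp a0)
  also have "\<dots> = (\<Prod>i<n. z i powi Poly_Mapping.lookup \<alpha> i) *
        (\<Prod>j<l. \<Prod>c<n. (z (n + j) powi v j c) powi Poly_Mapping.lookup \<alpha> c)"
    using z by (simp add: power_int_sum_exp power_int_mult[symmetric] mult.commute)
  also have "\<dots> = (\<Prod>c<n. (z c * (\<Prod>j<l. z (n + j) powi v j c)) powi Poly_Mapping.lookup \<alpha> c)"
    by (simp add: power_int_mult_distrib prod_power_int_distrib prod.distrib prod.swap[of _ "{..<l}"])
  finally show ?thesis .
qed

lemma eval_tilde:
  fixes g :: "'a::comm_monoid_add lpoly" and z :: "nat \<Rightarrow> 'b::field"
  assumes g: "\<forall>\<alpha>\<in>Poly_Mapping.keys g. \<forall>i\<ge>n. Poly_Mapping.lookup \<alpha> i = 0"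
    and z: "\<forall>j<l. z (n + j) \<noteq> 0"
  shows "eval_at emb (n + l) (tilde n l v g) z =
         eval_at emb n g (\<lambda>c. z c * (\<Prod>j<l. z (n + j) powi v j c))"
proof -
  have "eval_at emb (n + l) (tilde n l v g) z =
    (\<Sum>\<alpha>\<in>Poly_Mapping.keys g. emb (Poly_Mapping.lookup g \<alpha>) *
       (\<Prod>i<n + l. z i powi Poly_Mapping.lookup (tilde_exp n l v \<alpha>) i))"
    unfolding eval_at_def keys_tilde
    by (subst sum.reindex[OF inj_tilde_exp]) (simp add: lookup_tilde tilde_exp_inverse)
  also have "\<dots> = eval_at emb n g (\<lambda>c. z c * (\<Prod>j<l. z (n + j) powi v j c))"
    unfolding eval_at_def using g z by (intro sum.cong refl) (simp add: monomial_tilde_eval)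
  finally show ?thesis .
qed

lemma lookup_restr:
  "Poly_Mapping.lookup (restr f A) \<alpha> = (if expvec \<alpha> \<in> A then Poly_Mapping.lookup f \<alpha> else 0)"
  by (auto simp: restr_def lookup_sum lookup_single when_def in_keys_iff)

lemma keys_restr: "Poly_Mapping.keys (restr f A) \<subseteq> Poly_Mapping.keys f"
  by (auto simp: in_keys_iff lookup_restr split: if_splits)

lemma restr_tilde:
  "restr (tilde n l v g) (exp_change n l v ` A) = tilde n l v (restr g A)"
proof (rule poly_mapping_eqI)
  fix \<beta>
  have "expvec \<beta> = exp_change n l v (expvec (tilde_exp_inv n l v \<beta>))"
    using expvec_tilde_exp[of n l v "tilde_exp_inv n l v \<beta>"] by (simp add: tilde_exp_inverse)
  then have "expvec \<beta> \<in> exp_change n l v ` A \<longleftrightarrow> expvec (tilde_exp_inv n l v \<beta>) \<in> A"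
    using inj_exp_change by (simp add: inj_image_mem_iff)
  then show "Poly_Mapping.lookup (restr (tilde n l v g) (exp_change n l v ` A)) \<beta> =
             Poly_Mapping.lookup (tilde n l v (restr g A)) \<beta>"
    by (simp add: lookup_restr lookup_tilde)
qed

lemma faces_tilde_pullback:
  fixes A' :: "nat \<Rightarrow> (nat \<Rightarrow> real) set"
  assumes H: "(\<forall>i<k. A' i \<noteq> {} \<and> A' i face_of newton (tilde n l v (f i))) \<and>
      msum {..<k} A' face_of msum {..<k} (\<lambda>i. newton (tilde n l v (f i))) \<and>
      affdim (msum {..<k} A') \<le> int k - 1"
  obtains A where "\<forall>i<k. exp_change n l v ` A i = A' i"
    "(\<forall>i<k. A i \<noteq> {} \<and> A i face_of newton (f i)) \<and>
      msum {..<k} A face_of msum {..<k} (\<lambda>i. newton (f i)) \<and>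
      affdim (msum {..<k} A) \<le> int k - 1"
proof -
  let ?E = "exp_change n l v"
  note face_E = face_of_linear_image[OF linear_exp_change inj_exp_change]
  define A where "A i = {x. ?E x \<in> A' i}" for i
  have EA: "?E ` A i = A' i" if "i < k" for i
  proof -
    have "A' i \<subseteq> ?E ` newton (f i)"
      using H that face_of_imp_subset newton_tilde by metis
    then show ?thesis by (auto simp: A_def)
  qed
  have ms1: "msum {..<k} A' = ?E ` msum {..<k} A"
  proof -
    have "msum {..<k} A' = msum {..<k} (\<lambda>j. ?E ` A j)"
      by (rule msum_cong) (simp add: EA)
    then show ?thesis by (simp add: msum_linear_image[OF linear_exp_change])
  qed
  have ms2: "msum {..<k} (\<lambda>i. newton (tilde n l v (f i))) = ?E ` msum {..<k} (\<lambda>i. newton (f i))"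
    by (simp add: newton_tilde msum_linear_image[OF linear_exp_change, symmetric])
  have "A i \<noteq> {} \<and> A i face_of newton (f i)" if "i < k" for i
  proof
    show "A i \<noteq> {}" using H EA[OF that] that by auto
    have "?E ` A i face_of ?E ` newton (f i)" using H EA[OF that] that newton_tilde by metis
    then show "A i face_of newton (f i)" by (simp add: face_E)
  qed
  moreover have "msum {..<k} A face_of msum {..<k} (\<lambda>i. newton (f i))"
    using H ms1 ms2 by (simp add: face_E)
  moreover have "affdim (msum {..<k} A) \<le> int k - 1"
    using H ms1 by (simp add: affdim_linear_image[OF linear_exp_change inj_exp_change])
  ultimately show ?thesis using that EA by blast
qed

lemma torus_zero_tilde:
  fixes emb :: "'k::field \<Rightarrow> 'L::field" and f :: "nat \<Rightarrow> 'k lpoly"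
  assumes fp: "\<forall>i<k. lpoly_in n n (f i)"
    and z: "\<forall>i<n + l. z i \<noteq> 0"
    and zeros: "\<forall>i<k. eval_at emb (n + l) (restr (tilde n l v (f i)) (exp_change n l v ` A i)) z = 0"
  shows "\<exists>z'. (\<forall>i<n. z' i \<noteq> 0) \<and> (\<forall>i<k. eval_at emb n (restr (f i) (A i)) z' = 0)"
proof (intro exI conjI allI impI)
  define z' where "z' = (\<lambda>c. z c * (\<Prod>j<l. z (n + j) powi v j c))"
  have zl: "\<forall>j<l. z (n + j) \<noteq> 0" using z by simp
  fix i
  show "i < n \<Longrightarrow> z' i \<noteq> 0" using z by (simp add: z'_def)
  assume i: "i < k"
  have g: "\<forall>\<alpha>\<in>Poly_Mapping.keys (restr (f i) (A i)). \<forall>j\<ge>n. Poly_Mapping.lookup \<alpha> j = 0"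
    using fp i keys_restr[of "f i" "A i"] by (auto simp: lpoly_in_def)
  have "eval_at emb n (restr (f i) (A i)) z' = eval_at emb (n + l) (tilde n l v (restr (f i) (A i))) z"
    unfolding z'_def by (rule eval_tilde[OF g zl, symmetric])
  also have "\<dots> = 0" using zeros i by (simp add: restr_tilde)
  finally show "eval_at emb n (restr (f i) (A i)) z' = 0" .
qed

lemma newton_nondeg_tilde:
  fixes emb :: "'k::field \<Rightarrow> 'L::field" and f :: "nat \<Rightarrow> 'k lpoly"
  assumes fp: "\<forall>i<k. lpoly_in n n (f i)"
    and nd: "newton_nondeg emb n f k"
  shows "newton_nondeg emb (n + l) (\<lambda>i. tilde n l v (f i)) k"
  unfolding newton_nondeg_def
proof (intro allI impI notI)
  fix A' :: "nat \<Rightarrow> (nat \<Rightarrow> real) set"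
  assume "(\<forall>i<k. A' i \<noteq> {} \<and> A' i face_of newton (tilde n l v (f i))) \<and>
      msum {..<k} A' face_of msum {..<k} (\<lambda>i. newton (tilde n l v (f i))) \<and>
      affdim (msum {..<k} A') \<le> int k - 1"
  then obtain A where EA: "\<forall>i<k. exp_change n l v ` A i = A' i"
    and faces: "(\<forall>i<k. A i \<noteq> {} \<and> A i face_of newton (f i)) \<and>
      msum {..<k} A face_of msum {..<k} (\<lambda>i. newton (f i)) \<and>
      affdim (msum {..<k} A) \<le> int k - 1"
    by (rule faces_tilde_pullback)
  assume "\<exists>z. (\<forall>i<n + l. z i \<noteq> 0) \<and>
        (\<forall>i<k. eval_at emb (n + l) (restr (tilde n l v (f i)) (A' i)) z = 0)"
  then obtain z where "\<forall>i<n + l. z i \<noteq> 0"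
    "\<forall>i<k. eval_at emb (n + l) (restr (tilde n l v (f i)) (exp_change n l v ` A i)) z = 0"
    using EA by auto
  then have "\<exists>z'. (\<forall>i<n. z' i \<noteq> 0) \<and> (\<forall>i<k. eval_at emb n (restr (f i) (A i)) z' = 0)"
    by (rule torus_zero_tilde[OF fp])
  with nd faces show False unfolding newton_nondeg_def by blast
qed

section \<open>Part (d): completeness\<close>

definition lambda_part :: "nat \<Rightarrow> nat \<Rightarrow> (nat \<Rightarrow>\<^sub>0 int) \<Rightarrow> (nat \<Rightarrow>\<^sub>0 int)" where
  "lambda_part n l \<alpha> = (\<Sum>i\<in>{n..<n+l}. Poly_Mapping.single i (Poly_Mapping.lookup \<alpha> i))"

definition lambda_component :: "nat \<Rightarrow> nat \<Rightarrow> (nat \<Rightarrow>\<^sub>0 int) \<Rightarrow> 'a::comm_ring_1 lpoly \<Rightarrow> 'a lpoly" where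
  "lambda_component n l \<mu> p = (\<Sum>\<alpha>\<in>Poly_Mapping.keys p.
     if lambda_part n l \<alpha> = \<mu> then Poly_Mapping.single \<alpha> (Poly_Mapping.lookup p \<alpha>) else 0)"

lemma lookup_lambda_part:
  "Poly_Mapping.lookup (lambda_part n l \<alpha>) i = (if n \<le> i \<and> i < n + l then Poly_Mapping.lookup \<alpha> i else 0)"
  by (auto simp: lambda_part_def lookup_sum lookup_single when_def)

lemma lambda_part_add: "lambda_part n l (\<alpha> + \<beta>) = lambda_part n l \<alpha> + lambda_part n l \<beta>"
  by (rule poly_mapping_eqI) (simp add: lookup_lambda_part lookup_add)

lemma lambda_part_zero: "\<forall>i\<ge>n. Poly_Mapping.lookup \<alpha> i = 0 \<Longrightarrow> lambda_part n l \<alpha> = 0"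
  by (rule poly_mapping_eqI) (simp add: lookup_lambda_part)

lemma lookup_lambda_component:
  "Poly_Mapping.lookup (lambda_component n l \<mu> p) \<beta> =
   (if lambda_part n l \<beta> = \<mu> then Poly_Mapping.lookup p \<beta> else 0)"
proof -
  have "Poly_Mapping.lookup (lambda_component n l \<mu> p) \<beta> =
     (\<Sum>\<alpha>\<in>Poly_Mapping.keys p. if \<alpha> = \<beta> then (if lambda_part n l \<alpha> = \<mu> then Poly_Mapping.lookup p \<alpha> else 0) else 0)"
    unfolding lambda_component_def lookup_sum
  proof (rule sum.cong[OF refl])
    fix \<alpha> show "Poly_Mapping.lookup (if lambda_part n l \<alpha> = \<mu> then Poly_Mapping.single \<alpha> (Poly_Mapping.lookup p \<alpha>) else 0) \<beta> =
      (if \<alpha> = \<beta> then (if lambda_part n l \<alpha> = \<mu> then Poly_Mapping.lookup p \<alpha> else 0) else 0)"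
      by (cases "lambda_part n l \<alpha> = \<mu>"; cases "\<alpha> = \<beta>") (simp_all add: lookup_single when_def)
  qed
  also have "\<dots> = (if \<beta> \<in> Poly_Mapping.keys p then (if lambda_part n l \<beta> = \<mu> then Poly_Mapping.lookup p \<beta> else 0) else 0)"
    by (rule sum.delta[OF finite_keys])
  also have "\<dots> = (if lambda_part n l \<beta> = \<mu> then Poly_Mapping.lookup p \<beta> else 0)"
    by (simp add: in_keys_iff)
  finally show ?thesis .
qed

lemma lambda_component_sum:
  "lambda_component n l \<mu> (\<Sum>i\<in>I. F i) = (\<Sum>i\<in>I. lambda_component n l \<mu> (F i))"
  by (rule poly_mapping_eqI) (simp add: lookup_lambda_component lookup_sum)

lemma lambda_component_single:
  "lambda_component n l \<mu> (Poly_Mapping.single a c) =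
   (if lambda_part n l a = \<mu> then Poly_Mapping.single a c else 0)"
  by (rule poly_mapping_eqI) (auto simp: lookup_lambda_component lookup_single when_def)

lemma lambda_component_mult:
  fixes p q :: "'a::comm_ring_1 lpoly"
  assumes q: "\<forall>b\<in>Poly_Mapping.keys q. lambda_part n l b = 0"
  shows "lambda_component n l \<mu> (p * q) = lambda_component n l \<mu> p * q"
proof -
  let ?F = "\<lambda>a. Poly_Mapping.single a (Poly_Mapping.lookup p a)"
  let ?G = "\<lambda>b. Poly_Mapping.single b (Poly_Mapping.lookup q b)"
  have "p * q = (\<Sum>a\<in>Poly_Mapping.keys p. \<Sum>b\<in>Poly_Mapping.keys q. ?F a * ?G b)"
    by (subst monomial_expansion[of p], subst monomial_expansion[of q]) (simp add: sum_product)
  then have "lambda_component n l \<mu> (p * q) =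
      (\<Sum>a\<in>Poly_Mapping.keys p. \<Sum>b\<in>Poly_Mapping.keys q. lambda_component n l \<mu> (?F a * ?G b))"
    by (simp add: lambda_component_sum)
  also have "\<dots> = (\<Sum>a\<in>Poly_Mapping.keys p. \<Sum>b\<in>Poly_Mapping.keys q.
      (if lambda_part n l a = \<mu> then ?F a else 0) * ?G b)"
    by (intro sum.cong refl) (simp add: mult_single lambda_component_single lambda_part_add q)
  also have "\<dots> = (\<Sum>a\<in>Poly_Mapping.keys p. (if lambda_part n l a = \<mu> then ?F a else 0)) * q"
    by (subst monomial_expansion[of q]) (simp add: sum_product)
  also have "\<dots> = lambda_component n l \<mu> p * q"
    by (simp add: lambda_component_def)
  finally show ?thesis .
qed

lemma lpoly_in_shifted_component:
  fixes g :: "'a::comm_ring_1 lpoly"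
  assumes g: "lpoly_in n (n + l) g"
  shows "lpoly_in n n (Poly_Mapping.single (- \<mu>) 1 * lambda_component n l \<mu> g)"
  unfolding lpoly_in_def
proof
  fix \<gamma> assume "\<gamma> \<in> Poly_Mapping.keys (Poly_Mapping.single (- \<mu>) 1 * lambda_component n l \<mu> g)"
  moreover have "Poly_Mapping.keys (Poly_Mapping.single (- \<mu>) 1 * lambda_component n l \<mu> g) =
      (\<lambda>a. - \<mu> + a) ` Poly_Mapping.keys (lambda_component n l \<mu> g)"
    unfolding monomial_mult_reindex by (rule keys_reindex[where \<psi>="\<lambda>a. \<mu> + a"]) simp_all
  ultimately obtain a where \<gamma>: "\<gamma> = - \<mu> + a" and a: "a \<in> Poly_Mapping.keys (lambda_component n l \<mu> g)"
    by auto
  from a have aG: "a \<in> Poly_Mapping.keys g" and la: "lambda_part n l a = \<mu>"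
    by (auto simp: in_keys_iff lookup_lambda_component split: if_splits)
  have ga: "\<forall>j<n. 0 \<le> Poly_Mapping.lookup a j" "\<forall>j\<ge>n + l. Poly_Mapping.lookup a j = 0"
    using g aG by (auto simp: lpoly_in_def)
  have mu: "Poly_Mapping.lookup \<mu> j = (if n \<le> j \<and> j < n + l then Poly_Mapping.lookup a j else 0)" for j
    using la lookup_lambda_part[of n l a j] by simp
  show "(\<forall>j<n. 0 \<le> Poly_Mapping.lookup \<gamma> j) \<and> (\<forall>j\<ge>n. Poly_Mapping.lookup \<gamma> j = 0)"
  proof (intro conjI allI impI)
    fix j assume "j < n"
    then show "0 \<le> Poly_Mapping.lookup \<gamma> j" using ga(1) mu[of j] by (simp add: \<gamma> lookup_add lookup_minus)
  next
    fix j assume "n \<le> j"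
    then show "Poly_Mapping.lookup \<gamma> j = 0"
      using ga(2) mu[of j] by (cases "j < n + l") (simp_all add: \<gamma> lookup_add lookup_minus)
  qed
qed

lemma not_trop_cond_unique_min:
  assumes "\<not> trop_cond val N h w"
  obtains \<beta>0 where "\<beta>0 \<in> Poly_Mapping.keys h"
    "\<forall>\<gamma>\<in>Poly_Mapping.keys h. \<gamma> \<noteq> \<beta>0 \<longrightarrow> tw val N h w \<beta>0 < tw val N h w \<gamma>"
proof -
  let ?tw = "tw val N h w"
  have "Poly_Mapping.keys h \<noteq> {}" using assms by (auto simp: trop_cond_def)
  then have "Min (?tw ` Poly_Mapping.keys h) \<in> ?tw ` Poly_Mapping.keys h"
    by (intro Min_in) auto
  then obtain \<beta>0 where "\<beta>0 \<in> Poly_Mapping.keys h" "?tw \<beta>0 = Min (?tw ` Poly_Mapping.keys h)"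
    by auto
  then have b0: "\<beta>0 \<in> Poly_Mapping.keys h" "\<forall>\<gamma>\<in>Poly_Mapping.keys h. ?tw \<beta>0 \<le> ?tw \<gamma>"
    by simp_all
  have "?tw \<beta>0 < ?tw \<gamma>" if g: "\<gamma> \<in> Poly_Mapping.keys h" "\<gamma> \<noteq> \<beta>0" for \<gamma>
  proof -
    have "?tw \<beta>0 \<noteq> ?tw \<gamma>" using assms b0 g unfolding trop_cond_def by metis
    then show ?thesis using b0 g by force
  qed
  with b0 that show ?thesis by blast
qed

lemma not_trop_cond_part:
  assumes sub: "\<And>\<beta>. \<beta> \<in> Poly_Mapping.keys P \<Longrightarrow>
                   \<beta> \<in> Poly_Mapping.keys h \<and> Poly_Mapping.lookup P \<beta> = Poly_Mapping.lookup h \<beta>"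
    and b0: "\<beta>0 \<in> Poly_Mapping.keys P"
    and strict: "\<forall>\<gamma>\<in>Poly_Mapping.keys h. \<gamma> \<noteq> \<beta>0 \<longrightarrow> tw val N h w \<beta>0 < tw val N h w \<gamma>"
  shows "\<not> trop_cond val N P w"
proof
  assume "trop_cond val N P w"
  moreover have "P \<noteq> 0" using b0 by auto
  ultimately obtain \<alpha> \<beta> where ab: "\<alpha> \<in> Poly_Mapping.keys P" "\<beta> \<in> Poly_Mapping.keys P" "\<alpha> \<noteq> \<beta>"
    "tw val N P w \<alpha> = tw val N P w \<beta>" "tw val N P w \<alpha> \<le> tw val N P w \<beta>0"
    using b0 unfolding trop_cond_def by blast
  have twP: "tw val N P w \<gamma> = tw val N h w \<gamma>" if "\<gamma> \<in> Poly_Mapping.keys P" for \<gamma>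
    using sub[OF that] by (simp add: tw_def)
  have h_keys: "\<alpha> \<in> Poly_Mapping.keys h" "\<beta> \<in> Poly_Mapping.keys h" using sub ab(1,2) by auto
  have "\<alpha> = \<beta>0"
  proof (rule ccontr)
    assume "\<alpha> \<noteq> \<beta>0"
    then have "tw val N h w \<beta>0 < tw val N h w \<alpha>" using strict h_keys by blast
    then show False using ab(5) twP ab(1) b0 by simp
  qed
  then have "tw val N h w \<beta>0 < tw val N h w \<beta>" using strict h_keys ab(3) by auto
  then show False using ab(4) twP ab(1,2) \<open>\<alpha> = \<beta>0\<close> by simp
qed

lemma trop_cond_ideal_extension:
  fixes f G :: "nat \<Rightarrow> 'a::comm_ring_1 lpoly"
  assumes fp: "\<forall>i<k. lpoly_in n n (f i)"
    and Gp: "\<forall>i<k. lpoly_in n (n + l) (G i)"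
    and hyp: "\<forall>H\<in>gen_ideal n n f k. trop_cond val n H (trunc n u)"
  shows "trop_cond val (n + l) (\<Sum>i<k. G i * f i) u"
proof (rule ccontr)
  define h where "h = (\<Sum>i<k. G i * f i)"
  assume "\<not> trop_cond val (n + l) (\<Sum>i<k. G i * f i) u"
  then obtain \<beta>0 where b0: "\<beta>0 \<in> Poly_Mapping.keys h"
    and strict: "\<forall>\<gamma>\<in>Poly_Mapping.keys h. \<gamma> \<noteq> \<beta>0 \<longrightarrow> tw val (n + l) h u \<beta>0 < tw val (n + l) h u \<gamma>"
    unfolding h_def[symmetric] by (rule not_trop_cond_unique_min)
  define \<mu> where "\<mu> = lambda_part n l \<beta>0"
  define Hi where "Hi i = Poly_Mapping.single (- \<mu>) 1 * lambda_component n l \<mu> (G i)" for i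
  define H where "H = (\<Sum>i<k. Hi i * f i)"
  have Hi_poly: "\<forall>i<k. lpoly_in n n (Hi i)"
    using Gp by (simp add: Hi_def lpoly_in_shifted_component)
  have f_lambda_free: "\<forall>b\<in>Poly_Mapping.keys (f i). lambda_part n l b = 0" if "i < k" for i
    using fp that by (auto simp: lpoly_in_def intro!: lambda_part_zero)
  have PH: "lambda_component n l \<mu> h = Poly_Mapping.single \<mu> 1 * H"
  proof -
    have "Poly_Mapping.single \<mu> 1 * Hi i = lambda_component n l \<mu> (G i)" for i
      by (simp add: Hi_def mult.assoc[symmetric] mult_single)
    then show ?thesis
      unfolding h_def H_def lambda_component_sum using f_lambda_free
      by (simp add: lambda_component_mult sum_distrib_left mult.assoc[symmetric])
  qed
  have "H \<in> gen_ideal n n f k" unfolding gen_ideal_def H_def using Hi_poly by blast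
  then have "trop_cond val n H (trunc n u)" using hyp by blast
  moreover have "lpoly_in 0 n H"
    using keys_sum_mult_supported[of k Hi n f] Hi_poly fp by (simp add: lpoly_in_def H_def)
  ultimately have "trop_cond val (n + l) H u"
    using trop_relabel.trop_cond_relabel[OF trop_relabel_trunc[of 0 n H "n + l"]] by simp
  then have "trop_cond val (n + l) (lambda_component n l \<mu> h) u"
    unfolding PH by (simp add: trop_cond_monomial_mult)
  moreover have "\<not> trop_cond val (n + l) (lambda_component n l \<mu> h) u"
    using b0 strict \<mu>_def
    by (intro not_trop_cond_part[of "lambda_component n l \<mu> h" h \<beta>0])
       (auto simp: in_keys_iff lookup_lambda_component split: if_splits)
  ultimately show False by blast
qed

lemma lpoly_in_one: "lpoly_in p N (1 :: 'a::comm_ring_1 lpoly)"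
  by (simp add: lpoly_in_def)

lemma lpoly_in_zero: "lpoly_in p N (0 :: 'a::comm_ring_1 lpoly)"
  by (simp add: lpoly_in_def)

lemma generator_in_gen_ideal:
  fixes f :: "nat \<Rightarrow> 'a::comm_ring_1 lpoly"
  assumes "j < k" shows "f j \<in> gen_ideal p N f k"
proof -
  have "(\<Sum>i<k. (if i = j then 1 else 0) * f i) = f j"
    using assms by (simp add: if_distrib[of "\<lambda>x. x * _"] cong: if_cong)
  then show ?thesis unfolding gen_ideal_def
    by (intro CollectI exI[of _ "\<lambda>i. if i = j then 1 else 0"]) (simp add: lpoly_in_one lpoly_in_zero)
qed

lemma complete_int_tilde:
  fixes val :: "'k::field \<Rightarrow> real" and f :: "nat \<Rightarrow> 'k lpoly"
  assumes fp: "\<forall>i<k. lpoly_in n n (f i)" and kn: "k \<le> n"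
    and comp: "complete_int val n n f k"
  shows "complete_int val n (n + l) (\<lambda>i. tilde n l v (f i)) k"
  unfolding complete_int_def
proof
  let ?f = "\<lambda>i. tilde n l v (f i)"
  have lp: "\<forall>j\<in>{..<k}. lpoly_in n n (f j)" using fp by auto
  show "proper_int val (n + l) ?f {..<k}"
    by (rule proper_int_tilde[OF lp]) (use kn comp in \<open>auto simp: complete_int_def\<close>)
  have eqn: "trop_var val n (gen_ideal n n f k) = trop_inter val n f {..<k}"
    using comp by (simp add: complete_int_def)
  show "trop_var val (n + l) (gen_ideal n (n + l) ?f k) = trop_inter val (n + l) ?f {..<k}"
  proof (intro set_eqI iffI)
    fix w assume "w \<in> trop_var val (n + l) (gen_ideal n (n + l) ?f k)"
    then show "w \<in> trop_inter val (n + l) ?f {..<k}"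
      using generator_in_gen_ideal[where f="?f" and p=n and N="n + l" and k=k] by (auto simp: trop_var_def trop_inter_def)
  next
    fix w assume w: "w \<in> trop_inter val (n + l) ?f {..<k}"
    have wN: "w \<in> rspace (n + l)"
      and hyp: "\<forall>H\<in>gen_ideal n n f k. trop_cond val n H (trunc n (weight_change n l v w))"
      using w trop_inter_tilde_mem[OF lp] eqn by (auto simp: trop_var_def trop_hyp_trop_cond)
    have "trop_cond val (n + l) h w" if h: "h \<in> gen_ideal n (n + l) ?f k" for h
    proof -
      obtain g where g: "h = (\<Sum>i<k. g i * ?f i)" "\<forall>i<k. lpoly_in n (n + l) (g i)"
        using h by (auto simp: gen_ideal_def)
      define G where "G i = reindex (tilde_exp_inv n l v) (g i)" for i
      have "h = tilde n l v (\<Sum>i<k. G i * f i)"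
        by (simp add: g(1) G_def tilde_sum tilde_mult tilde_surj)
      moreover have "trop_cond val (n + l) (\<Sum>i<k. G i * f i) (weight_change n l v w)"
        using g(2) by (intro trop_cond_ideal_extension[OF fp _ hyp]) (simp add: G_def lpoly_in_tilde_inv)
      ultimately show ?thesis
        by (simp add: trop_relabel.trop_cond_relabel[OF trop_relabel_tilde])
    qed
    then show "w \<in> trop_var val (n + l) (gen_ideal n (n + l) ?f k)"
      using wN by (simp add: trop_var_def trop_hyp_trop_cond)
  qed
qed

theorem lemma3p3:
  fixes val :: "'k::field \<Rightarrow> real"
    and emb :: "'k \<Rightarrow> 'L::field"
    and n m l :: nat
    and A :: "nat \<Rightarrow> nat \<Rightarrow> real"
    and v :: "nat \<Rightarrow> nat \<Rightarrow> int"
    and f :: "nat \<Rightarrow> 'k lpoly"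
  assumes val: "real_valuation val"
    and clos: "alg_closure_emb emb"
    and A_rat: "\<forall>r<Suc m. \<forall>c<n. A r c \<in> \<rat>"
    and A_rank: "\<forall>y. \<exists>x. \<forall>r<Suc m. (\<Sum>c<n. A r c * x c) = y r"
    and l_def: "l = n - m - 1"
    and v_span: "{x \<in> rspace n. \<forall>r<Suc m. (\<Sum>c<n. A r c * x c) = 0} =
                 {(\<lambda>i. if i < n then (\<Sum>j<l. t j * real_of_int (v j i)) else 0) | t. True}"
    and f_poly: "\<forall>i<n - m. lpoly_in n n (f i)"
  shows
    "(proper_int val n f {..<n - m} \<longrightarrow>
        proper_int val (n + l) (\<lambda>i. tilde n l v (f i)) {..<n - m}) \<and>
     (transversal val n f (n - m) \<longrightarrow>
        transversal val (n + l) (\<lambda>i. tilde n l v (f i)) (n - m)) \<and>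
     (newton_nondeg emb n f (n - m) \<longrightarrow>
        newton_nondeg emb (n + l) (\<lambda>i. tilde n l v (f i)) (n - m)) \<and>
     (complete_int val n n f (n - m) \<longrightarrow>
        complete_int val n (n + l) (\<lambda>i. tilde n l v (f i)) (n - m))"
proof (intro conjI impI)
  have fp: "\<forall>j\<in>{..<n - m}. lpoly_in n n (f j)" using f_poly by simp
  show "proper_int val (n + l) (\<lambda>i. tilde n l v (f i)) {..<n - m}"
    if "proper_int val n f {..<n - m}"
    using proper_int_tilde[OF fp _ that] by simp
  show "transversal val (n + l) (\<lambda>i. tilde n l v (f i)) (n - m)"
    if "transversal val n f (n - m)"
    using transversal_tilde[OF f_poly _ that] by simp
  show "newton_nondeg emb (n + l) (\<lambda>i. tilde n l v (f i)) (n - m)"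
    if "newton_nondeg emb n f (n - m)"
    using newton_nondeg_tilde[OF f_poly that] .
  show "complete_int val n (n + l) (\<lambda>i. tilde n l v (f i)) (n - m)"
    if "complete_int val n n f (n - m)"
    using complete_int_tilde[OF f_poly _ that] by simp
qed

end
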